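(* Let $\kappa$ be a regular uncountable cardinal, $\lambda=\kappa^+$, and $(T,<_T)$ a tree of height $\kappa+1$ and cardinality $\lambda$. Let $B_T$ be the Boolean algebra generated by elements $\{x_t:t\in T\}$ freely subject only to the relations $x_s\le x_t$ for $s\le_T t$ (i.e. the quotient of the free Boolean algebra on $\{x_t:t\in T\}$ by the ideal generated by $\{x_s\cdot -x_t: s\le_T t\}$), and for $Y\subseteq T$ let $B_Y$ be the subalgebra of $B_T$ generated by $\{x_t:t\in Y\}$. If $Y$ is a subtree of $T$, then $B_Y\le_\kappa B_T$ (with respect to the Boolean partial order of $B_T$) if and only if $Y$ is closed in $T$. In particular, if the game $G_\kappa(T)$ is undetermined, then so is $G_\kappa(B_T)$.
   Context: For a partial order $(A,\le)$, $\mathrm{cf}$/$\mathrm{ci}$ denote the least cardinality of a cofinal/coinitial subset; $R\downarrow a=\{x\in R:x\le a\}$, $R\uparrow a=\{x\in R:a\le x\}$; $R\le_\kappa A$ means for all $a\in A$, $\mathrm{cf}(R\downarrow a)<\kappa$ and $\mathrm{ci}(R\uparrow a)<\kappa$. The game $G_\kappa(A)$: Players I and II alternately choose $x_\alpha$ (I) and $y_\alpha$ (II), $\alpha<\kappa$, subsets of $A$ of size $<\kappa$ with $x_\alpha\subseteq y_\alpha$ and $\bigcup_{\nu<\alpha}y_\nu\subseteq x_\alpha$; II wins iff $\bigcup_{\alpha<\kappa}x_\alpha\le_\kappa A$, otherwise I wins. A game is undetermined if neither player has a winning strategy. Tree notions: $Y\subseteq T$ is a subtree if $y\in Y$ and $x<_T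 y$ imply $x\in Y$; $Y$ is closed in $T$ if every element of the $\kappa$-th level of $T$ all of whose $<_T$-predecessors lie in $Y$ belongs to $Y$. *)

theory Defs
  imports Main
begin

(* ===== Cardinal bookkeeping =====
   A cardinal kappa is represented by a cardinal-order relation k :: 'k rel
   (Card_order k); "|X| < kappa" is  |X| <o k ;  positions alpha < kappa of a game
   are the elements of Field k, ordered by k. *)

definition cf_less :: "'k rel \<Rightarrow> ('b \<Rightarrow> 'b \<Rightarrow> bool) \<Rightarrow> 'b set \<Rightarrow> bool" where
  "cf_less k le P \<longleftrightarrow> (\<exists>C\<subseteq>P. (\<forall>x\<in>P. \<exists>c\<in>C. le x c) \<and> (card_of C, k) \<in> ordLess)"

definition ci_less :: "'k rel \<Rightarrow> ('b \<Rightarrow> 'b \<Rightarrow> bool) \<Rightarrow> 'b set \<Rightarrow> bool" where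
  "ci_less k le P \<longleftrightarrow> (\<exists>C\<subseteq>P. (\<forall>x\<in>P. \<exists>c\<in>C. le c x) \<and> (card_of C, k) \<in> ordLess)"

definition kappa_sub :: "'k rel \<Rightarrow> ('b \<Rightarrow> 'b \<Rightarrow> bool) \<Rightarrow> 'b set \<Rightarrow> 'b set \<Rightarrow> bool" where
  "kappa_sub k le R A \<longleftrightarrow> R \<subseteq> A \<and>
     (\<forall>a\<in>A. cf_less k le {x\<in>R. le x a} \<and> ci_less k le {x\<in>R. le a x})"

(* ===== The game G_kappa(A) =====
   A play is a pair of sequences xs (moves of I) and ys (moves of II) indexed by
   the stages alpha \<in> Field k. *)

definition stage_less :: "'k rel \<Rightarrow> 'k \<Rightarrow> 'k \<Rightarrow> bool" where
  "stage_less k \<nu> \<alpha> \<longleftrightarrow> (\<nu>, \<alpha>) \<in> k \<and> \<nu> \<noteq> \<alpha>"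

definition legal_I :: "'k rel \<Rightarrow> 'b set \<Rightarrow> ('k \<Rightarrow> 'b set) \<Rightarrow> ('k \<Rightarrow> 'b set) \<Rightarrow> 'k \<Rightarrow> bool" where
  "legal_I k A xs ys \<alpha> \<longleftrightarrow> xs \<alpha> \<subseteq> A \<and> (card_of (xs \<alpha>), k) \<in> ordLess \<and>
      (\<forall>\<nu>. stage_less k \<nu> \<alpha> \<longrightarrow> ys \<nu> \<subseteq> xs \<alpha>)"

definition legal_II :: "'k rel \<Rightarrow> 'b set \<Rightarrow> ('k \<Rightarrow> 'b set) \<Rightarrow> ('k \<Rightarrow> 'b set) \<Rightarrow> 'k \<Rightarrow> bool" where
  "legal_II k A xs ys \<alpha> \<longleftrightarrow> xs \<alpha> \<subseteq> ys \<alpha> \<and> ys \<alpha> \<subseteq> A \<and> (card_of (ys \<alpha>), k) \<in> ordLess"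

definition player_I_wins ::
  "'k rel \<Rightarrow> ('b \<Rightarrow> 'b \<Rightarrow> bool) \<Rightarrow> 'b set \<Rightarrow> ('k \<Rightarrow> 'b set) \<Rightarrow> ('k \<Rightarrow> 'b set) \<Rightarrow> bool" where
  "player_I_wins k le A xs ys \<longleftrightarrow>
     (\<exists>\<alpha>\<in>Field k. (\<forall>\<nu>. stage_less k \<nu> \<alpha> \<longrightarrow> legal_I k A xs ys \<nu> \<and> legal_II k A xs ys \<nu>)
                 \<and> legal_I k A xs ys \<alpha> \<and> \<not> legal_II k A xs ys \<alpha>)
   \<or> ((\<forall>\<alpha>\<in>Field k. legal_I k A xs ys \<alpha> \<and> legal_II k A xs ys \<alpha>)
      \<and> \<not> kappa_sub k le (\<Union>\<alpha>\<in>Field k. xs \<alpha>) A)"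

definition strategy_I :: "'k rel \<Rightarrow> ('k \<Rightarrow> ('k \<Rightarrow> 'b set) \<Rightarrow> 'b set) \<Rightarrow> bool" where
  "strategy_I k \<sigma> \<longleftrightarrow> (\<forall>\<alpha>\<in>Field k. \<forall>ys ys'.
      (\<forall>\<nu>. stage_less k \<nu> \<alpha> \<longrightarrow> ys \<nu> = ys' \<nu>) \<longrightarrow> \<sigma> \<alpha> ys = \<sigma> \<alpha> ys')"

definition strategy_II :: "'k rel \<Rightarrow> ('k \<Rightarrow> ('k \<Rightarrow> 'b set) \<Rightarrow> 'b set) \<Rightarrow> bool" where
  "strategy_II k \<tau> \<longleftrightarrow> (\<forall>\<alpha>\<in>Field k. \<forall>xs xs'.
      (\<forall>\<nu>. (\<nu>, \<alpha>) \<in> k \<longrightarrow> xs \<nu> = xs' \<nu>) \<longrightarrow> \<tau> \<alpha> xs = \<tau> \<alpha> xs')"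

definition winning_I ::
  "'k rel \<Rightarrow> ('b \<Rightarrow> 'b \<Rightarrow> bool) \<Rightarrow> 'b set \<Rightarrow> ('k \<Rightarrow> ('k \<Rightarrow> 'b set) \<Rightarrow> 'b set) \<Rightarrow> bool" where
  "winning_I k le A \<sigma> \<longleftrightarrow> strategy_I k \<sigma> \<and>
     (\<forall>xs ys. (\<forall>\<alpha>\<in>Field k. xs \<alpha> = \<sigma> \<alpha> ys) \<longrightarrow> player_I_wins k le A xs ys)"

definition winning_II ::
  "'k rel \<Rightarrow> ('b \<Rightarrow> 'b \<Rightarrow> bool) \<Rightarrow> 'b set \<Rightarrow> ('k \<Rightarrow> ('k \<Rightarrow> 'b set) \<Rightarrow> 'b set) \<Rightarrow> bool" where
  "winning_II k le A \<tau> \<longleftrightarrow> strategy_II k \<tau> \<and>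
     (\<forall>xs ys. (\<forall>\<alpha>\<in>Field k. ys \<alpha> = \<tau> \<alpha> xs) \<longrightarrow> \<not> player_I_wins k le A xs ys)"

definition game_undetermined :: "'k rel \<Rightarrow> ('b \<Rightarrow> 'b \<Rightarrow> bool) \<Rightarrow> 'b set \<Rightarrow> bool" where
  "game_undetermined k le A \<longleftrightarrow>
     \<not> (\<exists>\<sigma>. winning_I k le A \<sigma>) \<and> \<not> (\<exists>\<tau>. winning_II k le A \<tau>)"

definition tree_le :: "('a \<Rightarrow> 'a \<Rightarrow> bool) \<Rightarrow> 'a \<Rightarrow> 'a \<Rightarrow> bool" where
  "tree_le lt s t \<longleftrightarrow> lt s t \<or> s = t"

definition pred_rel :: "'a set \<Rightarrow> ('a \<Rightarrow> 'a \<Rightarrow> bool) \<Rightarrow> 'a \<Rightarrow> 'a rel" where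
  "pred_rel T lt t = {(x, y). x \<in> T \<and> y \<in> T \<and> lt x t \<and> lt y t \<and> tree_le lt x y}"

definition is_tree :: "'a set \<Rightarrow> ('a \<Rightarrow> 'a \<Rightarrow> bool) \<Rightarrow> bool" where
  "is_tree T lt \<longleftrightarrow>
     (\<forall>t\<in>T. \<not> lt t t) \<and>
     (\<forall>r\<in>T. \<forall>s\<in>T. \<forall>t\<in>T. lt r s \<and> lt s t \<longrightarrow> lt r t) \<and>
     (\<forall>t\<in>T. Well_order (pred_rel T lt t))"

definition on_level :: "'k rel \<Rightarrow> 'a set \<Rightarrow> ('a \<Rightarrow> 'a \<Rightarrow> bool) \<Rightarrow> 'a \<Rightarrow> bool" where
  "on_level k T lt t \<longleftrightarrow> t \<in> T \<and> (pred_rel T lt t, k) \<in> ordIso"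

(* height kappa+1: every level is <= kappa, and level kappa is nonempty *)
definition height_succ :: "'k rel \<Rightarrow> 'a set \<Rightarrow> ('a \<Rightarrow> 'a \<Rightarrow> bool) \<Rightarrow> bool" where
  "height_succ k T lt \<longleftrightarrow>
     (\<forall>t\<in>T. (pred_rel T lt t, k) \<in> ordLeq) \<and> (\<exists>t. on_level k T lt t)"

definition subtree :: "'a set \<Rightarrow> ('a \<Rightarrow> 'a \<Rightarrow> bool) \<Rightarrow> 'a set \<Rightarrow> bool" where
  "subtree T lt Y \<longleftrightarrow> Y \<subseteq> T \<and> (\<forall>y\<in>Y. \<forall>x\<in>T. lt x y \<longrightarrow> x \<in> Y)"

definition closed_in_tree :: "'k rel \<Rightarrow> 'a set \<Rightarrow> ('a \<Rightarrow> 'a \<Rightarrow> bool) \<Rightarrow> 'a set \<Rightarrow> bool" where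
  "closed_in_tree k T lt Y \<longleftrightarrow>
     (\<forall>t. on_level k T lt t \<and> (\<forall>s\<in>T. lt s t \<longrightarrow> s \<in> Y) \<longrightarrow> t \<in> Y)"

(* ===== The Boolean algebra B_T =====
   Free Boolean algebra on generators: Boolean terms modulo equivalence under all
   two-valued valuations (Lindenbaum algebra). *)

datatype 'a bterm = BVar 'a | BBot | BTop | BNeg "'a bterm"
  | BAnd "'a bterm" "'a bterm" | BOr "'a bterm" "'a bterm"

primrec bvars :: "'a bterm \<Rightarrow> 'a set" where
  "bvars (BVar a) = {a}"
| "bvars BBot = {}"
| "bvars BTop = {}"
| "bvars (BNeg p) = bvars p"
| "bvars (BAnd p q) = bvars p \<union> bvars q"
| "bvars (BOr p q) = bvars p \<union> bvars q"

primrec beval :: "('a \<Rightarrow> bool) \<Rightarrow> 'a bterm \<Rightarrow> bool" where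
  "beval v (BVar a) = v a"
| "beval v BBot = False"
| "beval v BTop = True"
| "beval v (BNeg p) = (\<not> beval v p)"
| "beval v (BAnd p q) = (beval v p \<and> beval v q)"
| "beval v (BOr p q) = (beval v p \<or> beval v q)"

definition free_le :: "'a bterm \<Rightarrow> 'a bterm \<Rightarrow> bool" where
  "free_le p q \<longleftrightarrow> (\<forall>v. beval v p \<longrightarrow> beval v q)"

(* the ideal generated by x_s * -x_t  (s <=_T t): elements below a finite join of generators *)
definition tree_ideal :: "'a set \<Rightarrow> ('a \<Rightarrow> 'a \<Rightarrow> bool) \<Rightarrow> 'a bterm set" where
  "tree_ideal T lt = {c. bvars c \<subseteq> T \<and> (\<exists>l. set l \<subseteq> {(s, t). s \<in> T \<and> t \<in> T \<and> tree_le lt s t} \<and>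
       free_le c (foldr (\<lambda>(s, t) acc. BOr (BAnd (BVar s) (BNeg (BVar t))) acc) l BBot))}"

definition bsymdiff :: "'a bterm \<Rightarrow> 'a bterm \<Rightarrow> 'a bterm" where
  "bsymdiff p q = BOr (BAnd p (BNeg q)) (BAnd q (BNeg p))"

definition bt_class :: "'a set \<Rightarrow> ('a \<Rightarrow> 'a \<Rightarrow> bool) \<Rightarrow> 'a bterm \<Rightarrow> 'a bterm set" where
  "bt_class T lt p = {q. bvars q \<subseteq> T \<and> bsymdiff p q \<in> tree_ideal T lt}"

(* B_Y : the subalgebra of B_T generated by {x_t : t \<in> Y}  (B_T itself for Y = T) *)
definition BA_gen :: "'a set \<Rightarrow> ('a \<Rightarrow> 'a \<Rightarrow> bool) \<Rightarrow> 'a set \<Rightarrow> 'a bterm set set" where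
  "BA_gen T lt Y = bt_class T lt ` {p. bvars p \<subseteq> Y}"

definition BT_le :: "'a set \<Rightarrow> ('a \<Rightarrow> 'a \<Rightarrow> bool) \<Rightarrow> 'a bterm set \<Rightarrow> 'a bterm set \<Rightarrow> bool" where
  "BT_le T lt P Q \<longleftrightarrow> (\<exists>p q. bvars p \<subseteq> T \<and> bvars q \<subseteq> T \<and>
      P = bt_class T lt p \<and> Q = bt_class T lt q \<and> BAnd p (BNeg q) \<in> tree_ideal T lt)"

end

theory Submission
  imports Defs
begin

text \<open>
  The elements of \<open>B\<^sub>T\<close> are represented by Boolean terms, and \<open>B\<^sub>T\<close> is ordered by
  entailment over the monotone valuations, i.e. the upward closed subsets of \<open>T\<close>.
  Two monotone valuations, one given on the variables \<open>G \<subseteq> Y\<close> of a term of \<open>B\<^sub>Y\<close> and one on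
  the variables \<open>F\<close> of a term of \<open>B\<^sub>T\<close>, can be glued to a single one as soon as they agree
  on \<open>F \<inter> Y\<close> and on the elements of \<open>G\<close> below \<open>F - Y\<close>. Hence every inequality between an
  element of \<open>B\<^sub>Y\<close> and \<open>b \<in> B\<^sub>T\<close> has an interpolant generated by \<open>F \<inter> Y\<close> and the
  elements of \<open>Y\<close> below \<open>F - Y\<close>. For a closed subtree \<open>Y\<close> these are fewer than \<open>\<kappa>\<close>, which
  gives \<open>B\<^sub>Y \<le>\<^sub>\<kappa> B\<^sub>T\<close>. Conversely, if \<open>t\<close> on level \<open>\<kappa>\<close> is missing from \<open>Y\<close> although
  all its predecessors are in \<open>Y\<close>, a cofinal family below \<open>x\<^sub>t\<close> in \<open>B\<^sub>Y\<close> of size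
  \<open>< \<kappa>\<close> mentions fewer than \<open>\<kappa>\<close> predecessors of \<open>t\<close>; by regularity they lie below some
  \<open>s <\<^sub>T t\<close>, and the member of the family above \<open>x\<^sub>s\<close> would have to mention a node
  between \<open>s\<close> and \<open>t\<close>.

  A winning strategy in \<open>G\<^sub>\<kappa>(B\<^sub>T)\<close> is turned into one in \<open>G\<^sub>\<kappa>(T)\<close> by translating
  moves in \<open>T\<close> into the subalgebras they generate and moves in \<open>B\<^sub>T\<close> into the variables
  of representatives, adding at stage \<open>\<alpha>\<close> the predecessors of rank \<open>< \<alpha>\<close>. The union of
  the resulting play in \<open>T\<close> is then a subtree \<open>R\<close> whose generated subalgebra is the union
  of the play in \<open>B\<^sub>T\<close>, and \<open>B\<^sub>R \<le>\<^sub>\<kappa> B\<^sub>T \<longleftrightarrow> R\<close> closed \<open>\<longleftrightarrow> R \<le>\<^sub>\<kappa> T\<close>.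
\<close>

unbundle cardinal_syntax

section \<open>Boolean terms\<close>

lemma finite_bvars: "finite (bvars p)"
  by (induction p) auto

lemma beval_cong: "(\<And>x. x \<in> bvars p \<Longrightarrow> v x = w x) \<Longrightarrow> beval v p = beval w p"
  by (induction p) auto

lemma beval_foldr_BOr:
  "beval v (foldr (\<lambda>(s, t) acc. BOr (BAnd (BVar s) (BNeg (BVar t))) acc) l BBot) \<longleftrightarrow>
   (\<exists>(s, t)\<in>set l. v s \<and> \<not> v t)"
  by (induction l) auto

lemma bterm_of_fun:
  assumes "finite S" and "\<And>v w. (\<And>x. x \<in> S \<Longrightarrow> v x = w x) \<Longrightarrow> \<Phi> v = \<Phi> w"
  shows "\<exists>p. bvars p \<subseteq> S \<and> (\<forall>v. beval v p = \<Phi> v)"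
  using assms
proof (induction S arbitrary: \<Phi> rule: finite_induct)
  case empty
  then have const: "\<Phi> v = \<Phi> (\<lambda>_. True)" for v
    by blast
  have "beval v (if \<Phi> (\<lambda>_. True) then BTop else BBot) = \<Phi> v" for v
    using const[of v] by simp
  then show ?case
    by (metis bvars.simps(2,3) order_refl)
next
  case (insert x S)
  have "\<exists>p. bvars p \<subseteq> S \<and> (\<forall>v. beval v p = \<Phi> (v(x := b)))" for b
  proof (rule insert.IH)
    show "\<Phi> (v(x := b)) = \<Phi> (w(x := b))" if "\<And>y. y \<in> S \<Longrightarrow> v y = w y" for v w
      using that by (intro insert.prems) auto
  qed
  then obtain p1 p0 where
    p1: "bvars p1 \<subseteq> S" "\<And>v. beval v p1 = \<Phi> (v(x := True))" and
    p0: "bvars p0 \<subseteq> S" "\<And>v. beval v p0 = \<Phi> (v(x := False))"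
    by meson
  have "beval v (BOr (BAnd (BVar x) p1) (BAnd (BNeg (BVar x)) p0)) = \<Phi> v" for v
    by (cases "v x") (simp_all add: p1 p0 fun_upd_idem)
  moreover have "bvars (BOr (BAnd (BVar x) p1) (BAnd (BNeg (BVar x)) p0)) \<subseteq> insert x S"
    using p1(1) p0(1) by auto
  ultimately show ?case
    by blast
qed

primrec bterms_depth :: "'a set \<Rightarrow> nat \<Rightarrow> 'a bterm set" where
  "bterms_depth S 0 = BVar ` S \<union> {BBot, BTop}"
| "bterms_depth S (Suc n) = bterms_depth S n \<union> BNeg ` bterms_depth S n
      \<union> case_prod BAnd ` (bterms_depth S n \<times> bterms_depth S n)
      \<union> case_prod BOr ` (bterms_depth S n \<times> bterms_depth S n)"

lemma bterms_depth_mono: "m \<le> n \<Longrightarrow> bterms_depth S m \<subseteq> bterms_depth S n"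
  by (induction n) (auto simp: le_Suc_eq)

lemma bterm_in_bterms_depth: "bvars p \<subseteq> S \<Longrightarrow> p \<in> bterms_depth S (size p)"
proof (induction p)
  case (BAnd p q)
  then have "p \<in> bterms_depth S (size p + size q)" "q \<in> bterms_depth S (size p + size q)"
    using bterms_depth_mono[of "size p" "size p + size q" S]
      bterms_depth_mono[of "size q" "size p + size q" S] by auto
  then show ?case
    by (auto intro: rev_image_eqI[of "(p, q)"])
next
  case (BOr p q)
  then have "p \<in> bterms_depth S (size p + size q)" "q \<in> bterms_depth S (size p + size q)"
    using bterms_depth_mono[of "size p" "size p + size q" S]
      bterms_depth_mono[of "size q" "size p + size q" S] by auto
  then show ?case
    by (auto intro: rev_image_eqI[of "(p, q)"])
qed auto

section \<open>Regular uncountable cardinals and the game\<close>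

locale regular_uncountable_card =
  fixes k :: "'k rel"
  assumes Card_order: "Card_order k"
    and regular: "regularCard k"
    and uncountable: "natLeq <o k"
begin

lemma Well_order: "Well_order k"
  using Card_order unfolding card_order_on_def by blast

lemma wo_rel: "wo_rel k"
  using Card_order by (rule Card_order_wo_rel)

lemma infinite_Field: "infinite (Field k)"
proof
  assume "finite (Field k)"
  then have "|Field k| <o natLeq"
    using finite_iff_ordLess_natLeq by blast
  moreover have "k =o |Field k|"
    using Card_order card_of_Field_ordIso ordIso_symmetric by blast
  ultimately have "k <o natLeq"
    using ordIso_ordLess_trans by blast
  then show False
    using uncountable not_ordLess_ordLeq ordLess_imp_ordLeq by blast
qed

lemma Cinfinite: "Cinfinite k"
  using infinite_Field Card_order by (simp add: cinfinite_def)

lemma finite_small: "finite A \<Longrightarrow> |A| <o k"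
  using finite_ordLess_infinite[OF card_of_Well_order _ _ infinite_Field] Card_order
  by (simp add: Field_card_of card_order_on_well_order_on)

lemma UN_small: "|I| <o k \<Longrightarrow> (\<And>i. i \<in> I \<Longrightarrow> |A i| <o k) \<Longrightarrow> |\<Union>i\<in>I. A i| <o k"
  using card_of_UNION_ordLess_infinite_Field_regularCard[OF regular Cinfinite] by blast

lemma countable_UN_small: "(\<And>n::nat. |A n| <o k) \<Longrightarrow> |\<Union>n. A n| <o k"
  by (rule UN_small[OF ordIso_ordLess_trans[OF card_of_nat uncountable]])

lemma Un_small: "|A| <o k \<Longrightarrow> |B| <o k \<Longrightarrow> |A \<union> B| <o k"
  by (rule card_of_Un_ordLess_infinite_Field[OF infinite_Field Card_order])

lemma subset_small: "|A| <o k \<Longrightarrow> B \<subseteq> A \<Longrightarrow> |B| <o k"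
  by (rule ordLeq_ordLess_trans[OF card_of_mono1])

lemma image_small: "|A| <o k \<Longrightarrow> |f ` A| <o k"
  by (rule ordLeq_ordLess_trans[OF card_of_image])

lemma Times_small: "|A| <o k \<Longrightarrow> |B| <o k \<Longrightarrow> |A \<times> B| <o k"
proof -
  assume "|A| <o k" "|B| <o k"
  then have "|\<Union>a\<in>A. Pair a ` B| <o k"
    by (intro UN_small image_small)
  moreover have "A \<times> B = (\<Union>a\<in>A. Pair a ` B)"
    by blast
  ultimately show ?thesis
    by simp
qed

lemma stage_refl: "a \<in> Field k \<Longrightarrow> (a, a) \<in> k"
  using wo_rel.REFL[OF wo_rel] unfolding refl_on_def by blast

lemma stage_less_trans: "stage_less k a b \<Longrightarrow> stage_less k b c \<Longrightarrow> stage_less k a c"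
  unfolding stage_less_def using Card_order_trans[OF Card_order] by blast

lemma stage_less_Field: "stage_less k a b \<Longrightarrow> a \<in> Field k"
  unfolding stage_less_def by (auto simp: Field_def)

lemma stage_less_cases:
  "a \<in> Field k \<Longrightarrow> b \<in> Field k \<Longrightarrow> a = b \<or> stage_less k a b \<or> stage_less k b a"
  unfolding stage_less_def using wo_rel.TOTALS[OF wo_rel] by blast

lemma stage_less_succ: "a \<in> Field k \<Longrightarrow> \<exists>b\<in>Field k. stage_less k a b"
  unfolding stage_less_def using Cinfinite_limit[OF _ Cinfinite] by blast

lemma stage_less_succ2:
  "a \<in> Field k \<Longrightarrow> b \<in> Field k \<Longrightarrow> \<exists>c\<in>Field k. stage_less k a c \<and> stage_less k b c"
  unfolding stage_less_def using Cinfinite_limit2[OF _ _ Cinfinite] by blast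

lemma small_bounded:
  assumes "K \<subseteq> Field k" and "|K| <o k"
  obtains \<gamma> where "\<gamma> \<in> Field k" and "\<And>\<beta>. \<beta> \<in> K \<Longrightarrow> stage_less k \<beta> \<gamma>"
proof -
  have "\<not> cofinal K k"
    using assms regular not_ordLess_ordIso unfolding regularCard_def by blast
  then obtain \<alpha> where \<alpha>: "\<alpha> \<in> Field k" and not_above: "\<And>\<beta>. \<beta> \<in> K \<Longrightarrow> \<not> stage_less k \<alpha> \<beta>"
    unfolding cofinal_def stage_less_def by blast
  obtain \<gamma> where "\<gamma> \<in> Field k" and "stage_less k \<alpha> \<gamma>"
    using stage_less_succ[OF \<alpha>] by blast
  moreover have "stage_less k \<beta> \<gamma>" if "\<beta> \<in> K" for \<beta>
    using stage_less_cases[of \<beta> \<alpha>] not_above[OF that] that assms(1) \<alpha> \<open>stage_less k \<alpha> \<gamma>\<close>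
      stage_less_trans by blast
  ultimately show ?thesis
    using that by blast
qed

lemma stage_small: "a \<in> Field k \<Longrightarrow> |{\<nu>. stage_less k \<nu> a}| <o k"
  using card_of_underS[OF Card_order] unfolding underS_def stage_less_def
  by (metis (no_types, lifting) Collect_cong)

lemma stage_induct [consumes 1, case_names step]:
  assumes "\<alpha> \<in> Field k"
    and "\<And>\<alpha>. \<alpha> \<in> Field k \<Longrightarrow> (\<And>\<nu>. stage_less k \<nu> \<alpha> \<Longrightarrow> P \<nu>) \<Longrightarrow> P \<alpha>"
  shows "P \<alpha>"
proof -
  have "\<alpha> \<in> Field k \<longrightarrow> P \<alpha>"
  proof (induction rule: wo_rel.well_order_induct[OF wo_rel])
    case (1 \<alpha>)
    then show ?case
      using assms(2) stage_less_Field unfolding stage_less_def by blast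
  qed
  with assms(1) show ?thesis
    by blast
qed

lemma stage_minimal:
  assumes "\<alpha> \<in> Field k" and "\<not> P \<alpha>"
  obtains \<mu> where "\<mu> \<in> Field k" and "\<not> P \<mu>" and "\<And>\<nu>. stage_less k \<nu> \<mu> \<Longrightarrow> P \<nu>"
proof (rule ccontr)
  assume "\<not> thesis"
  with that have "\<And>\<mu>. \<mu> \<in> Field k \<Longrightarrow> (\<And>\<nu>. stage_less k \<nu> \<mu> \<Longrightarrow> P \<nu>) \<Longrightarrow> P \<mu>"
    by blast
  with assms show False
    using stage_induct[of \<alpha> P] by blast
qed

lemma bterms_depth_small: "|S| <o k \<Longrightarrow> |bterms_depth S n| <o k"
proof (induction n)
  case 0
  then show ?case
    using Un_small[OF image_small finite_small[of "{BBot, BTop}"]] by simp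
next
  case (Suc n)
  then have "|bterms_depth S n| <o k" "|bterms_depth S n \<times> bterms_depth S n| <o k"
    using Times_small by blast+
  then show ?case
    by (simp add: Un_small image_small)
qed

lemma bterms_small:
  assumes "|S| <o k"
  shows "|{p. bvars p \<subseteq> S}| <o k"
proof (rule subset_small)
  show "|\<Union>n. bterms_depth S n| <o k"
    using assms by (intro countable_UN_small bterms_depth_small)
  show "{p. bvars p \<subseteq> S} \<subseteq> (\<Union>n. bterms_depth S n)"
    using bterm_in_bterms_depth by blast
qed

end

definition legal_before :: "'k rel \<Rightarrow> 'b set \<Rightarrow> ('k \<Rightarrow> 'b set) \<Rightarrow> ('k \<Rightarrow> 'b set) \<Rightarrow> 'k \<Rightarrow> bool" where
  "legal_before k A xs ys \<alpha> \<longleftrightarrow>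
     (\<forall>\<nu>. stage_less k \<nu> \<alpha> \<longrightarrow> legal_I k A xs ys \<nu> \<and> legal_II k A xs ys \<nu>)"

definition legal_play :: "'k rel \<Rightarrow> 'b set \<Rightarrow> ('k \<Rightarrow> 'b set) \<Rightarrow> ('k \<Rightarrow> 'b set) \<Rightarrow> bool" where
  "legal_play k A xs ys \<longleftrightarrow> (\<forall>\<alpha>\<in>Field k. legal_I k A xs ys \<alpha> \<and> legal_II k A xs ys \<alpha>)"

lemma player_I_wins_iff:
  "player_I_wins k le A xs ys \<longleftrightarrow>
     (\<exists>\<alpha>\<in>Field k. legal_before k A xs ys \<alpha> \<and> legal_I k A xs ys \<alpha> \<and> \<not> legal_II k A xs ys \<alpha>)
     \<or> (legal_play k A xs ys \<and> \<not> kappa_sub k le (\<Union>\<alpha>\<in>Field k. xs \<alpha>) A)"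
  unfolding player_I_wins_def legal_before_def legal_play_def ..

lemma legal_II_if_not_player_I_wins:
  "\<not> player_I_wins k le A xs ys \<Longrightarrow> \<alpha> \<in> Field k \<Longrightarrow> legal_before k A xs ys \<alpha> \<Longrightarrow>
    legal_I k A xs ys \<alpha> \<Longrightarrow> legal_II k A xs ys \<alpha>"
  unfolding player_I_wins_iff by blast

lemma player_I_wins_iff_if_II_legal:
  assumes "\<And>\<alpha>. \<alpha> \<in> Field k \<Longrightarrow> legal_before k A xs ys \<alpha> \<Longrightarrow> legal_I k A xs ys \<alpha> \<Longrightarrow>
      legal_II k A xs ys \<alpha>"
  shows "player_I_wins k le A xs ys \<longleftrightarrow>
    legal_play k A xs ys \<and> \<not> kappa_sub k le (\<Union>\<alpha>\<in>Field k. xs \<alpha>) A"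
  unfolding player_I_wins_iff using assms by blast

lemma player_I_wins_legal_play_iff:
  "legal_play k A xs ys \<Longrightarrow>
    player_I_wins k le A xs ys \<longleftrightarrow> \<not> kappa_sub k le (\<Union>\<alpha>\<in>Field k. xs \<alpha>) A"
  unfolding player_I_wins_iff legal_play_def by blast

context regular_uncountable_card
begin

lemma legal_I_if_player_I_wins:
  assumes "player_I_wins k le A xs ys" and "\<alpha> \<in> Field k" and "legal_before k A xs ys \<alpha>"
  shows "legal_I k A xs ys \<alpha>"
  using assms stage_less_cases unfolding player_I_wins_iff legal_before_def legal_play_def
  by metis

lemma player_I_wins_iff_if_I_legal:
  assumes "\<And>\<alpha>. \<alpha> \<in> Field k \<Longrightarrow> legal_before k A xs ys \<alpha> \<Longrightarrow> legal_I k A xs ys \<alpha>"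
  shows "player_I_wins k le A xs ys \<longleftrightarrow>
    \<not> (legal_play k A xs ys \<and> kappa_sub k le (\<Union>\<alpha>\<in>Field k. xs \<alpha>) A)"
proof (cases "legal_play k A xs ys")
  case False
  then obtain \<alpha> where "\<alpha> \<in> Field k" "\<not> (legal_I k A xs ys \<alpha> \<and> legal_II k A xs ys \<alpha>)"
    unfolding legal_play_def by blast
  then obtain \<mu> where "\<mu> \<in> Field k" "\<not> (legal_I k A xs ys \<mu> \<and> legal_II k A xs ys \<mu>)"
    and "legal_before k A xs ys \<mu>"
    unfolding legal_before_def by (rule stage_minimal) blast
  with assms False show ?thesis
    unfolding player_I_wins_iff by blast
qed (auto simp: player_I_wins_iff legal_play_def)

lemma legal_play_chains:
  assumes "legal_play k A xs ys"
  shows "relChain k xs" and "relChain k ys"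
  using assms unfolding legal_play_def relChain_def legal_I_def legal_II_def stage_less_def
  by (metis FieldI1 FieldI2 subset_trans order_refl)+

lemma legal_play_Union_eq:
  assumes "legal_play k A xs ys"
  shows "(\<Union>\<alpha>\<in>Field k. ys \<alpha>) = (\<Union>\<alpha>\<in>Field k. xs \<alpha>)"
proof (intro equalityI UN_least)
  fix \<alpha> assume "\<alpha> \<in> Field k"
  then obtain \<beta> where "\<beta> \<in> Field k" "stage_less k \<alpha> \<beta>"
    using stage_less_succ by blast
  then show "ys \<alpha> \<subseteq> (\<Union>\<alpha>\<in>Field k. xs \<alpha>)"
    using assms unfolding legal_play_def legal_I_def by blast
next
  fix \<alpha> assume "\<alpha> \<in> Field k"
  then show "xs \<alpha> \<subseteq> (\<Union>\<alpha>\<in>Field k. ys \<alpha>)"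
    using assms unfolding legal_play_def legal_II_def by blast
qed

end

section \<open>Monotone valuations and interpolation\<close>

locale tree_order =
  fixes T :: "'a set" and lt :: "'a \<Rightarrow> 'a \<Rightarrow> bool"
  assumes tree: "is_tree T lt"
begin

lemma lt_irrefl: "t \<in> T \<Longrightarrow> \<not> lt t t"
  using tree unfolding is_tree_def by blast

lemma lt_trans: "r \<in> T \<Longrightarrow> s \<in> T \<Longrightarrow> t \<in> T \<Longrightarrow> lt r s \<Longrightarrow> lt s t \<Longrightarrow> lt r t"
  using tree unfolding is_tree_def by blast

lemma lt_asym: "s \<in> T \<Longrightarrow> t \<in> T \<Longrightarrow> lt s t \<Longrightarrow> \<not> lt t s"
  using lt_irrefl lt_trans by blast

text \<open>The ultrafilters of \<open>B\<^sub>T\<close> are the upward closed subsets of \<open>T\<close>.\<close>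

definition monotone_val :: "('a \<Rightarrow> bool) \<Rightarrow> bool" where
  "monotone_val v \<longleftrightarrow> (\<forall>s\<in>T. \<forall>t\<in>T. lt s t \<longrightarrow> v s \<longrightarrow> v t)"

definition entails :: "'a bterm \<Rightarrow> 'a bterm \<Rightarrow> bool" where
  "entails p q \<longleftrightarrow> (\<forall>v. monotone_val v \<longrightarrow> beval v p \<longrightarrow> beval v q)"

definition upclose :: "'a set \<Rightarrow> ('a \<Rightarrow> bool) \<Rightarrow> 'a \<Rightarrow> bool" where
  "upclose A v z \<longleftrightarrow> (\<exists>a\<in>A. v a \<and> tree_le lt a z)"

lemma monotone_val_upclose: "A \<subseteq> T \<Longrightarrow> monotone_val (upclose A v)"
  unfolding monotone_val_def upclose_def tree_le_def using lt_trans by blast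

lemma monotone_val_tree_le: "s \<in> T \<Longrightarrow> monotone_val (tree_le lt s)"
  unfolding monotone_val_def tree_le_def using lt_trans by blast

lemma beval_upclose:
  assumes "A \<subseteq> T" and "\<And>a b. a \<in> A \<Longrightarrow> b \<in> A \<Longrightarrow> lt a b \<Longrightarrow> v a \<Longrightarrow> v b"
    and "bvars p \<subseteq> A"
  shows "beval (upclose A v) p = beval v p"
proof (rule beval_cong)
  fix x assume "x \<in> bvars p"
  with assms show "upclose A v x = v x"
    unfolding upclose_def tree_le_def by blast
qed

lemma mem_tree_ideal_iff:
  "c \<in> tree_ideal T lt \<longleftrightarrow> bvars c \<subseteq> T \<and> (\<forall>v. monotone_val v \<longrightarrow> \<not> beval v c)"
proof
  assume "c \<in> tree_ideal T lt"
  then obtain l where c: "bvars c \<subseteq> T" and l: "set l \<subseteq> {(s, t). s \<in> T \<and> t \<in> T \<and> tree_le lt s t}"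
    and "free_le c (foldr (\<lambda>(s, t) acc. BOr (BAnd (BVar s) (BNeg (BVar t))) acc) l BBot)"
    unfolding tree_ideal_def by blast
  then have "\<exists>(s, t)\<in>set l. v s \<and> \<not> v t" if "beval v c" for v
    using that unfolding free_le_def beval_foldr_BOr by blast
  moreover have "\<not> (v s \<and> \<not> v t)" if "monotone_val v" "(s, t) \<in> set l" for v s t
    using that l unfolding monotone_val_def tree_le_def by blast
  ultimately have "\<not> beval v c" if "monotone_val v" for v
    using that by blast
  with c show "bvars c \<subseteq> T \<and> (\<forall>v. monotone_val v \<longrightarrow> \<not> beval v c)"
    by blast
next
  assume c: "bvars c \<subseteq> T \<and> (\<forall>v. monotone_val v \<longrightarrow> \<not> beval v c)"
  have "finite {(s, t). s \<in> bvars c \<and> t \<in> bvars c \<and> tree_le lt s t}"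
    by (rule finite_subset[of _ "bvars c \<times> bvars c"]) (auto simp: finite_bvars)
  then obtain l where l: "set l = {(s, t). s \<in> bvars c \<and> t \<in> bvars c \<and> tree_le lt s t}"
    using finite_list by blast
  have "\<exists>(s, t)\<in>set l. v s \<and> \<not> v t" if "beval v c" for v
  proof (rule ccontr)
    assume "\<not> (\<exists>(s, t)\<in>set l. v s \<and> \<not> v t)"
    then have "v b" if "a \<in> bvars c" "b \<in> bvars c" "lt a b" "v a" for a b
      using that l unfolding tree_le_def by blast
    then have "beval (upclose (bvars c) v) c = beval v c"
      using c by (intro beval_upclose) auto
    then show False
      using c monotone_val_upclose[of "bvars c" v] \<open>beval v c\<close> by blast
  qed
  then have "free_le c (foldr (\<lambda>(s, t) acc. BOr (BAnd (BVar s) (BNeg (BVar t))) acc) l BBot)"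
    unfolding free_le_def beval_foldr_BOr by blast
  moreover have "set l \<subseteq> {(s, t). s \<in> T \<and> t \<in> T \<and> tree_le lt s t}"
    using l c by auto
  ultimately show "c \<in> tree_ideal T lt"
    using c unfolding tree_ideal_def by blast
qed

lemma bt_class_eq:
  "bvars p \<subseteq> T \<Longrightarrow> bt_class T lt p = {q. bvars q \<subseteq> T \<and> entails p q \<and> entails q p}"
  unfolding bt_class_def mem_tree_ideal_iff entails_def bsymdiff_def by auto

lemma bt_class_self: "bvars p \<subseteq> T \<Longrightarrow> p \<in> bt_class T lt p"
  unfolding bt_class_eq entails_def by blast

lemma BT_le_iff:
  assumes p: "bvars p \<subseteq> T" and q: "bvars q \<subseteq> T"
  shows "BT_le T lt (bt_class T lt p) (bt_class T lt q) \<longleftrightarrow> entails p q"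
proof
  assume "BT_le T lt (bt_class T lt p) (bt_class T lt q)"
  then obtain p' q' where p': "bvars p' \<subseteq> T" and q': "bvars q' \<subseteq> T"
    and "bt_class T lt p = bt_class T lt p'" "bt_class T lt q = bt_class T lt q'"
    and "BAnd p' (BNeg q') \<in> tree_ideal T lt"
    unfolding BT_le_def by blast
  then have "p \<in> bt_class T lt p'" "q' \<in> bt_class T lt q" "entails p' q'"
    using bt_class_self[OF p] bt_class_self[OF q'] unfolding mem_tree_ideal_iff entails_def
    by auto
  then show "entails p q"
    unfolding bt_class_eq[OF p'] bt_class_eq[OF q] entails_def by blast
next
  assume "entails p q"
  then have "BAnd p (BNeg q) \<in> tree_ideal T lt"
    using p q unfolding mem_tree_ideal_iff entails_def by simp
  with p q show "BT_le T lt (bt_class T lt p) (bt_class T lt q)"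
    unfolding BT_le_def by blast
qed

lemma entails_BVar_between:
  assumes s: "s \<in> T" and t: "t \<in> T" and g: "bvars g \<subseteq> T"
    and "entails (BVar s) g" and "entails g (BVar t)"
  obtains a where "a \<in> bvars g" and "tree_le lt s a" and "tree_le lt a t"
proof -
  txt \<open>Evaluate at the upward closure of \<open>{a \<in> bvars g. s \<le> a}\<close>.\<close>
  have "tree_le lt s b" if "a \<in> bvars g" "b \<in> bvars g" "lt a b" "tree_le lt s a" for a b
    using monotone_val_tree_le[OF s] that g unfolding monotone_val_def by blast
  then have "beval (upclose (bvars g) (tree_le lt s)) g = beval (tree_le lt s) g"
    using beval_upclose[OF g] by blast
  moreover have "beval (tree_le lt s) g"
    using \<open>entails (BVar s) g\<close> monotone_val_tree_le[OF s] unfolding entails_def tree_le_def by simp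
  ultimately have "upclose (bvars g) (tree_le lt s) t"
    using \<open>entails g (BVar t)\<close> monotone_val_upclose[OF g] unfolding entails_def by force
  with that show ?thesis
    unfolding upclose_def by blast
qed

lemma BT_le_BVar: "s \<in> T \<Longrightarrow> t \<in> T \<Longrightarrow> lt s t \<Longrightarrow>
    BT_le T lt (bt_class T lt (BVar s)) (bt_class T lt (BVar t))"
  using BT_le_iff[of "BVar s" "BVar t"] unfolding entails_def monotone_val_def by simp

lemma mem_BA_gen: "x \<in> BA_gen T lt Y \<longleftrightarrow> (\<exists>p. bvars p \<subseteq> Y \<and> x = bt_class T lt p)"
  unfolding BA_gen_def by blast

lemma BVar_mem_BA_gen: "s \<in> Y \<Longrightarrow> bt_class T lt (BVar s) \<in> BA_gen T lt Y"
  unfolding mem_BA_gen by (intro exI[of _ "BVar s"]) simp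

lemma BA_gen_mono: "Y \<subseteq> Z \<Longrightarrow> BA_gen T lt Y \<subseteq> BA_gen T lt Z"
  unfolding BA_gen_def by auto

lemma subtree_subset: "subtree T lt Y \<Longrightarrow> Y \<subseteq> T"
  unfolding subtree_def by blast

lemma subtree_downward: "subtree T lt Y \<Longrightarrow> y \<in> Y \<Longrightarrow> x \<in> T \<Longrightarrow> lt x y \<Longrightarrow> x \<in> Y"
  unfolding subtree_def by blast

context
  fixes Y F G :: "'a set" and u v :: "'a \<Rightarrow> bool"
  assumes Y: "subtree T lt Y" and F: "F \<subseteq> T" and G: "G \<subseteq> Y"
    and u: "monotone_val u" and v: "monotone_val v"
    and agree_F: "\<And>y. y \<in> F \<inter> Y \<Longrightarrow> u y = v y"
    and agree_G: "\<And>g f. g \<in> G \<Longrightarrow> f \<in> F - Y \<Longrightarrow> lt g f \<Longrightarrow> u g = v g"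
begin

lemma glued_val_mono:
  assumes ab: "a \<in> G \<union> F" "b \<in> G \<union> F" "lt a b"
    and "if a \<in> G then u a else v a"
  shows "if b \<in> G then u b else v b"
proof -
  have "a \<in> T" "b \<in> T"
    using ab F G subtree_subset[OF Y] by blast+
  then have u_up: "u a \<Longrightarrow> u b" and v_up: "v a \<Longrightarrow> v b"
    using u v ab(3) unfolding monotone_val_def by blast+
  consider "b \<in> G" | "b \<notin> G" "a \<in> G" | "b \<notin> G" "a \<notin> G"
    by blast
  then show ?thesis
  proof cases
    case 1
    then have "a \<in> G \<or> a \<in> F \<inter> Y"
      using ab \<open>a \<in> T\<close> subtree_downward[OF Y] G by blast
    then have "u a"
      using assms(4) agree_F by (cases "a \<in> G") auto
    with 1 u_up show ?thesis
      by simp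
  next
    case 2
    then have "u a"
      using assms(4) by simp
    have "v b"
    proof (cases "b \<in> Y")
      case True
      then show ?thesis
        using u_up \<open>u a\<close> agree_F[of b] 2 ab(2) by auto
    next
      case False
      then show ?thesis
        using v_up \<open>u a\<close> agree_G[of a b] 2 ab(2,3) by auto
    qed
    with 2 show ?thesis
      by simp
  next
    case 3
    with assms(4) v_up show ?thesis
      by simp
  qed
qed

lemma monotone_val_amalgamation:
  obtains w where "monotone_val w" and "\<And>g. g \<in> G \<Longrightarrow> w g = u g" and "\<And>f. f \<in> F \<Longrightarrow> w f = v f"
proof -
  define m where "m z = (if z \<in> G then u z else v z)" for z
  have GFT: "G \<union> F \<subseteq> T"
    using G F subtree_subset[OF Y] by blast
  have upclose_m: "upclose (G \<union> F) m z = m z" if "z \<in> G \<union> F" for z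
    using beval_upclose[OF GFT glued_val_mono[folded m_def], where p = "BVar z"] that by simp
  show ?thesis
  proof (rule that)
    show "monotone_val (upclose (G \<union> F) m)"
      by (rule monotone_val_upclose[OF GFT])
    show "upclose (G \<union> F) m g = u g" if "g \<in> G" for g
      using upclose_m that unfolding m_def by simp
    show "upclose (G \<union> F) m f = v f" if "f \<in> F" for f
      using upclose_m that agree_F G unfolding m_def by auto
  qed
qed

end

definition interp_support :: "'a set \<Rightarrow> 'a set \<Rightarrow> 'a set" where
  "interp_support Y F = (F \<inter> Y) \<union> {y\<in>Y. \<exists>f\<in>F - Y. lt y f}"

lemma entails_transfer:
  assumes Y: "subtree T lt Y" and b: "bvars b \<subseteq> T" and g: "bvars g \<subseteq> Y"
    and "entails g b" and u: "monotone_val u" "beval u g" and v: "monotone_val v"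
    and agree: "\<And>y. y \<in> (bvars b \<inter> Y) \<union> {x\<in>bvars g. \<exists>f\<in>bvars b - Y. lt x f} \<Longrightarrow> u y = v y"
  shows "beval v b"
proof -
  obtain w where w: "monotone_val w" "\<And>x. x \<in> bvars g \<Longrightarrow> w x = u x"
    "\<And>x. x \<in> bvars b \<Longrightarrow> w x = v x"
    using monotone_val_amalgamation[OF Y b g u(1) v] agree by blast
  have "beval w g"
    using u(2) w(2) beval_cong[of g w u] by blast
  then have "beval w b"
    using \<open>entails g b\<close> w(1) unfolding entails_def by blast
  then show "beval v b"
    using w(3) beval_cong[of b w v] by blast
qed

lemma interpolant:
  assumes Y: "subtree T lt Y" and b: "bvars b \<subseteq> T" and g: "bvars g \<subseteq> Y"
    and "entails g b"
  obtains p where "bvars p \<subseteq> interp_support Y (bvars b)" and "entails g p" and "entails p b"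
proof -
  define S where "S = (bvars b \<inter> Y) \<union> {x\<in>bvars g. \<exists>f\<in>bvars b - Y. lt x f}"
  have "finite S"
    unfolding S_def using finite_bvars by auto
  txt \<open>The interpolant is the strongest consequence of \<open>g\<close> over \<open>S\<close>.\<close>
  define \<Phi> where "\<Phi> v \<longleftrightarrow> (\<exists>u. monotone_val u \<and> beval u g \<and> (\<forall>y\<in>S. u y = v y))" for v
  have "\<exists>p. bvars p \<subseteq> S \<and> (\<forall>v. beval v p = \<Phi> v)"
  proof (rule bterm_of_fun[OF \<open>finite S\<close>])
    fix v w :: "'a \<Rightarrow> bool"
    assume "\<And>x. x \<in> S \<Longrightarrow> v x = w x"
    then show "\<Phi> v = \<Phi> w"
      unfolding \<Phi>_def by simp
  qed
  then obtain p where p: "bvars p \<subseteq> S" and p_iff: "\<And>v. beval v p \<longleftrightarrow> \<Phi> v"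
    by blast
  have "entails p b"
    unfolding entails_def
  proof (intro allI impI)
    fix v assume v: "monotone_val v" "beval v p"
    then obtain u where "monotone_val u" "beval u g" "\<forall>y\<in>S. u y = v y"
      using p_iff unfolding \<Phi>_def by blast
    with v(1) show "beval v b"
      using entails_transfer[OF Y b g \<open>entails g b\<close>] unfolding S_def by blast
  qed
  moreover have "entails g p"
    unfolding entails_def p_iff \<Phi>_def by blast
  moreover have "S \<subseteq> interp_support Y (bvars b)"
    unfolding S_def interp_support_def using g by blast
  ultimately show ?thesis
    using that p by blast
qed

lemma interpolant_dual:
  assumes Y: "subtree T lt Y" and b: "bvars b \<subseteq> T" and g: "bvars g \<subseteq> Y"
    and "entails b g"
  obtains p where "bvars p \<subseteq> interp_support Y (bvars b)" and "entails b p" and "entails p g"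
proof -
  have "entails (BNeg g) (BNeg b)"
    using \<open>entails b g\<close> unfolding entails_def by auto
  moreover have "bvars (BNeg b) \<subseteq> T" "bvars (BNeg g) \<subseteq> Y"
    using b g by simp_all
  ultimately obtain p where p: "bvars p \<subseteq> interp_support Y (bvars (BNeg b))"
    "entails (BNeg g) p" "entails p (BNeg b)"
    using interpolant[OF Y] by blast
  show ?thesis
  proof (rule that[of "BNeg p"])
    show "bvars (BNeg p) \<subseteq> interp_support Y (bvars b)"
      using p(1) by simp
    show "entails b (BNeg p)" "entails (BNeg p) g"
      using p(2,3) unfolding entails_def by auto
  qed
qed

end

section \<open>Trees of height \<open>\<kappa> + 1\<close> and closed subtrees\<close>

locale kappa_tree = regular_uncountable_card k + tree_order T lt
  for k :: "'k rel" and T :: "'a set" and lt :: "'a \<Rightarrow> 'a \<Rightarrow> bool" +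
  assumes height: "height_succ k T lt"
begin

definition preds :: "'a \<Rightarrow> 'a set" where
  "preds t = {s\<in>T. lt s t}"

lemma Field_pred_rel: "Field (pred_rel T lt t) = preds t"
  unfolding preds_def pred_rel_def Field_def tree_le_def by auto

lemma Well_order_pred_rel: "t \<in> T \<Longrightarrow> Well_order (pred_rel T lt t)"
  using tree unfolding is_tree_def by blast

lemma preds_linear:
  assumes "t \<in> T" "s \<in> preds t" "s' \<in> preds t" "s \<noteq> s'"
  shows "lt s s' \<or> lt s' s"
proof -
  have "(s, s') \<in> pred_rel T lt t \<or> (s', s) \<in> pred_rel T lt t"
    using wo_rel.TOTALS[of "pred_rel T lt t"] Well_order_pred_rel[OF assms(1)] assms(2,3)
    unfolding wo_rel_def Field_pred_rel by blast
  then show ?thesis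
    using assms(4) unfolding pred_rel_def tree_le_def by auto
qed

definition pred_rank :: "'a \<Rightarrow> 'a \<Rightarrow> 'k" where
  "pred_rank t = (SOME f. embed (pred_rel T lt t) k f)"

lemma embed_pred_rank: "t \<in> T \<Longrightarrow> embed (pred_rel T lt t) k (pred_rank t)"
  using height someI_ex[of "embed (pred_rel T lt t) k"]
  unfolding height_succ_def ordLeq_def pred_rank_def by blast

lemma pred_rank_Field: "t \<in> T \<Longrightarrow> s \<in> preds t \<Longrightarrow> pred_rank t s \<in> Field k"
  using embed_Field[OF embed_pred_rank] Field_pred_rel by blast

lemma inj_on_pred_rank: "t \<in> T \<Longrightarrow> inj_on (pred_rank t) (preds t)"
  using embed_inj_on[OF Well_order_pred_rel embed_pred_rank] Field_pred_rel by simp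

lemma pred_rank_less_iff:
  assumes "t \<in> T" "s \<in> preds t" "s' \<in> preds t"
  shows "stage_less k (pred_rank t s') (pred_rank t s) \<longleftrightarrow> lt s' s"
proof -
  have mono: "stage_less k (pred_rank t s') (pred_rank t s)" if "s \<in> preds t" "s' \<in> preds t" "lt s' s" for s s'
  proof -
    have "(s', s) \<in> pred_rel T lt t"
      using that unfolding pred_rel_def preds_def tree_le_def by auto
    then have "(pred_rank t s', pred_rank t s) \<in> k"
      using embed_compat[OF embed_pred_rank[OF assms(1)]] unfolding compat_def by blast
    moreover have "pred_rank t s' \<noteq> pred_rank t s"
      using inj_on_pred_rank[OF assms(1)] that lt_irrefl unfolding inj_on_def preds_def by blast
    ultimately show ?thesis
      unfolding stage_less_def by blast
  qed
  show ?thesis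
  proof
    assume less: "stage_less k (pred_rank t s') (pred_rank t s)"
    then have "s \<noteq> s'"
      unfolding stage_less_def by blast
    moreover have "\<not> lt s s'"
      using less mono[OF assms(3,2)] wo_rel.ANTISYM[OF wo_rel]
      unfolding stage_less_def antisym_def by blast
    ultimately show "lt s' s"
      using preds_linear assms by blast
  qed (use mono assms in blast)
qed

lemma preds_of_rank_below_small:
  assumes t: "t \<in> T" and \<alpha>: "\<alpha> \<in> Field k"
  shows "|{s\<in>preds t. stage_less k (pred_rank t s) \<alpha>}| <o k"
proof -
  have "inj_on (pred_rank t) {s\<in>preds t. stage_less k (pred_rank t s) \<alpha>}"
    using inj_on_pred_rank[OF t] by (rule inj_on_subset) blast
  moreover have "pred_rank t ` {s\<in>preds t. stage_less k (pred_rank t s) \<alpha>} \<subseteq> {\<nu>. stage_less k \<nu> \<alpha>}"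
    by blast
  ultimately have "|{s\<in>preds t. stage_less k (pred_rank t s) \<alpha>}| \<le>o |{\<nu>. stage_less k \<nu> \<alpha>}|"
    by (rule card_of_ordLeq[THEN iffD1, OF exI, OF conjI])
  then show ?thesis
    using stage_small[OF \<alpha>] ordLeq_ordLess_trans by blast
qed

lemma preds_small:
  assumes t: "t \<in> T" and s: "s \<in> preds t"
  shows "|preds s| <o k"
proof -
  have "preds s \<subseteq> {s'\<in>preds t. stage_less k (pred_rank t s') (pred_rank t s)}"
    using s t lt_trans pred_rank_less_iff[OF t s] unfolding preds_def by blast
  then show ?thesis
    using preds_of_rank_below_small[OF t pred_rank_Field[OF t s]] by (rule subset_small[rotated])
qed

lemma pred_rank_onto: "on_level k T lt t \<Longrightarrow> pred_rank t ` preds t = Field k"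
proof -
  assume lv: "on_level k T lt t"
  then have t: "t \<in> T"
    unfolding on_level_def by blast
  obtain f where f: "iso (pred_rel T lt t) k f"
    using lv unfolding on_level_def ordIso_def by blast
  have "\<forall>s\<in>preds t. pred_rank t s = f s"
    using embed_unique[OF Well_order_pred_rel[OF t] Well_order embed_pred_rank[OF t], of f] f Field_pred_rel
    unfolding iso_def by blast
  moreover have "f ` preds t = Field k"
    using f Field_pred_rel unfolding iso_def bij_betw_def by metis
  ultimately show ?thesis
    by (metis image_cong)
qed

lemma small_preds_bounded:
  assumes lv: "on_level k T lt t" and L: "L \<subseteq> preds t" and "|L| <o k"
  obtains s where "s \<in> preds t" and "\<And>l. l \<in> L \<Longrightarrow> lt l s"
proof -
  have t: "t \<in> T"
    using lv unfolding on_level_def by blast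
  obtain \<gamma> where "\<gamma> \<in> Field k" and above: "\<And>\<beta>. \<beta> \<in> pred_rank t ` L \<Longrightarrow> stage_less k \<beta> \<gamma>"
    using small_bounded[of "pred_rank t ` L"] pred_rank_Field[OF t] L image_small[OF \<open>|L| <o k\<close>]
    by blast
  then obtain s where s: "s \<in> preds t" "pred_rank t s = \<gamma>"
    using pred_rank_onto[OF lv] by (metis imageE)
  have "lt l s" if "l \<in> L" for l
    using above[of "pred_rank t l"] pred_rank_less_iff[OF t s(1)] s(2) that L by blast
  with s(1) show ?thesis
    using that by blast
qed

lemma subtree_below_small:
  assumes Y: "subtree T lt Y" and closed: "closed_in_tree k T lt Y" and f: "f \<in> T" "f \<notin> Y"
  shows "|{y\<in>Y. lt y f}| <o k"
proof (cases "preds f \<subseteq> Y")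
  case False
  then obtain s where s: "s \<in> preds f" "s \<notin> Y"
    by blast
  have "{y\<in>Y. lt y f} \<subseteq> preds s"
  proof
    fix y assume y: "y \<in> {y\<in>Y. lt y f}"
    then have "y \<in> preds f"
      using Y unfolding subtree_def preds_def by blast
    moreover have "\<not> lt s y" "y \<noteq> s"
      using y s subtree_downward[OF Y] unfolding preds_def by blast+
    ultimately show "y \<in> preds s"
      using preds_linear[OF f(1) _ s(1)] unfolding preds_def by blast
  qed
  then show ?thesis
    using subset_small[OF preds_small[OF f(1) s(1)]] by blast
next
  case True
  then have "\<not> on_level k T lt f"
    using closed f unfolding closed_in_tree_def preds_def by blast
  moreover have "pred_rel T lt f \<le>o k"
    using height f unfolding height_succ_def by blast
  ultimately have "pred_rel T lt f <o k"
    using f ordLeq_iff_ordLess_or_ordIso unfolding on_level_def by blast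
  moreover have "|preds f| \<le>o pred_rel T lt f"
    using card_of_least Well_order_pred_rel[OF f(1)] Field_pred_rel[of f] by metis
  ultimately have "|preds f| <o k"
    using ordLeq_ordLess_trans by blast
  moreover have "{y\<in>Y. lt y f} \<subseteq> preds f"
    using Y unfolding subtree_def preds_def by blast
  ultimately show ?thesis
    by (rule subset_small)
qed

lemma not_closed_witness:
  assumes "\<not> closed_in_tree k T lt Y"
  obtains t where "on_level k T lt t" and "t \<in> T" and "preds t \<subseteq> Y" and "t \<notin> Y"
  using assms unfolding closed_in_tree_def on_level_def preds_def by blast

lemma tree_kappa_sub_imp_closed:
  assumes Y: "subtree T lt Y" and ks: "kappa_sub k (tree_le lt) Y T"
  shows "closed_in_tree k T lt Y"
proof (rule ccontr)
  assume "\<not> closed_in_tree k T lt Y"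
  then obtain t where lv: "on_level k T lt t" and "t \<in> T" "preds t \<subseteq> Y" "t \<notin> Y"
    by (rule not_closed_witness)
  then have "{x\<in>Y. tree_le lt x t} = preds t"
    using Y unfolding subtree_def preds_def tree_le_def by blast
  moreover have "cf_less k (tree_le lt) {x\<in>Y. tree_le lt x t}"
    using ks \<open>t \<in> T\<close> unfolding kappa_sub_def by blast
  ultimately obtain C where C: "C \<subseteq> preds t" "\<forall>x\<in>preds t. \<exists>c\<in>C. tree_le lt x c" "|C| <o k"
    unfolding cf_less_def by auto
  obtain s where s: "s \<in> preds t" "\<And>c. c \<in> C \<Longrightarrow> lt c s"
    using small_preds_bounded[OF lv C(1,3)] by blast
  then obtain c where "c \<in> C" "tree_le lt s c"
    using C(2) by blast
  then show False
    using s C(1) lt_irrefl lt_asym unfolding preds_def tree_le_def by blast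
qed

lemma closed_imp_tree_kappa_sub:
  assumes Y: "subtree T lt Y" and closed: "closed_in_tree k T lt Y"
  shows "kappa_sub k (tree_le lt) Y T"
proof -
  have "cf_less k (tree_le lt) {x\<in>Y. tree_le lt x a} \<and> ci_less k (tree_le lt) {x\<in>Y. tree_le lt a x}"
    if a: "a \<in> T" for a
  proof (cases "a \<in> Y")
    case True
    then show ?thesis
      unfolding cf_less_def ci_less_def
      by (intro conjI exI[of _ "{a}"]) (auto simp: tree_le_def finite_small)
  next
    case False
    then have "{x\<in>Y. tree_le lt x a} = {y\<in>Y. lt y a}" "{x\<in>Y. tree_le lt a x} = {}"
      using subtree_downward[OF Y] a unfolding tree_le_def by blast+
    then show ?thesis
      using subtree_below_small[OF Y closed a False] finite_small[of "{}"]
      unfolding cf_less_def ci_less_def by (auto simp: tree_le_def)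
  qed
  then show ?thesis
    using Y unfolding kappa_sub_def subtree_def by blast
qed

lemma tree_kappa_sub_iff_closed:
  "subtree T lt Y \<Longrightarrow> kappa_sub k (tree_le lt) Y T \<longleftrightarrow> closed_in_tree k T lt Y"
  using tree_kappa_sub_imp_closed closed_imp_tree_kappa_sub by blast

lemma BA_gen_small: "|S| <o k \<Longrightarrow> |BA_gen T lt S| <o k"
  unfolding BA_gen_def by (rule image_small[OF bterms_small])

lemma interp_support_small:
  assumes Y: "subtree T lt Y" and closed: "closed_in_tree k T lt Y"
    and "finite F" and "F \<subseteq> T"
  shows "|interp_support Y F| <o k"
proof -
  have "{y\<in>Y. \<exists>f\<in>F - Y. lt y f} = (\<Union>f\<in>F - Y. {y\<in>Y. lt y f})"
    by blast
  moreover have "|\<Union>f\<in>F - Y. {y\<in>Y. lt y f}| <o k"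
  proof (rule UN_small)
    show "|F - Y| <o k"
      using \<open>finite F\<close> by (simp add: finite_small)
    show "|{y\<in>Y. lt y f}| <o k" if "f \<in> F - Y" for f
      using subtree_below_small[OF Y closed] that \<open>F \<subseteq> T\<close> by blast
  qed
  ultimately show ?thesis
    unfolding interp_support_def using \<open>finite F\<close> by (simp add: Un_small finite_small)
qed

lemma BA_gen_interpolant:
  assumes Y: "subtree T lt Y" and b: "bvars b \<subseteq> T" and x: "x \<in> BA_gen T lt Y"
  shows "BT_le T lt x (bt_class T lt b) \<Longrightarrow>
      \<exists>c\<in>BA_gen T lt (interp_support Y (bvars b)). BT_le T lt x c \<and> BT_le T lt c (bt_class T lt b)"
    and "BT_le T lt (bt_class T lt b) x \<Longrightarrow>
      \<exists>c\<in>BA_gen T lt (interp_support Y (bvars b)). BT_le T lt (bt_class T lt b) c \<and> BT_le T lt c x"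
proof -
  obtain g where g: "bvars g \<subseteq> Y" and x_eq: "x = bt_class T lt g"
    using x unfolding mem_BA_gen by blast
  have gT: "bvars g \<subseteq> T" and supp_T: "interp_support Y (bvars b) \<subseteq> T"
    using g subtree_subset[OF Y] unfolding interp_support_def by blast+
  show "\<exists>c\<in>BA_gen T lt (interp_support Y (bvars b)). BT_le T lt x c \<and> BT_le T lt c (bt_class T lt b)"
    if "BT_le T lt x (bt_class T lt b)"
  proof -
    have "entails g b"
      using that BT_le_iff[OF gT b] x_eq by simp
    then obtain p where p: "bvars p \<subseteq> interp_support Y (bvars b)" "entails g p" "entails p b"
      using interpolant[OF Y b g] by blast
    then have "BT_le T lt x (bt_class T lt p)" "BT_le T lt (bt_class T lt p) (bt_class T lt b)"
      using BT_le_iff[OF gT] BT_le_iff[OF _ b] supp_T x_eq by auto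
    moreover have "bt_class T lt p \<in> BA_gen T lt (interp_support Y (bvars b))"
      using p(1) unfolding mem_BA_gen by blast
    ultimately show ?thesis
      by blast
  qed
  show "\<exists>c\<in>BA_gen T lt (interp_support Y (bvars b)). BT_le T lt (bt_class T lt b) c \<and> BT_le T lt c x"
    if "BT_le T lt (bt_class T lt b) x"
  proof -
    have "entails b g"
      using that BT_le_iff[OF b gT] x_eq by simp
    then obtain p where p: "bvars p \<subseteq> interp_support Y (bvars b)" "entails b p" "entails p g"
      using interpolant_dual[OF Y b g] by blast
    then have "BT_le T lt (bt_class T lt b) (bt_class T lt p)" "BT_le T lt (bt_class T lt p) x"
      using BT_le_iff[OF b] BT_le_iff[OF _ gT] supp_T x_eq by auto
    moreover have "bt_class T lt p \<in> BA_gen T lt (interp_support Y (bvars b))"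
      using p(1) unfolding mem_BA_gen by blast
    ultimately show ?thesis
      by blast
  qed
qed

lemma closed_imp_BA_gen_kappa_sub:
  assumes Y: "subtree T lt Y" and closed: "closed_in_tree k T lt Y"
  shows "kappa_sub k (BT_le T lt) (BA_gen T lt Y) (BA_gen T lt T)"
  unfolding kappa_sub_def
proof (intro conjI ballI)
  show "BA_gen T lt Y \<subseteq> BA_gen T lt T"
    using subtree_subset[OF Y] by (rule BA_gen_mono)
  fix a assume "a \<in> BA_gen T lt T"
  then obtain b where b: "bvars b \<subseteq> T" and a: "a = bt_class T lt b"
    unfolding mem_BA_gen by blast
  define S where "S = interp_support Y (bvars b)"
  have "S \<subseteq> Y"
    unfolding S_def interp_support_def by blast
  then have sub: "BA_gen T lt S \<subseteq> BA_gen T lt Y"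
    by (rule BA_gen_mono)
  have small: "|BA_gen T lt S| <o k"
    unfolding S_def using interp_support_small[OF Y closed finite_bvars b] by (rule BA_gen_small)
  show "cf_less k (BT_le T lt) {x\<in>BA_gen T lt Y. BT_le T lt x a}"
    unfolding cf_less_def
  proof (intro exI conjI)
    show "{c\<in>BA_gen T lt S. BT_le T lt c a} \<subseteq> {x\<in>BA_gen T lt Y. BT_le T lt x a}"
      using sub by blast
    show "|{c\<in>BA_gen T lt S. BT_le T lt c a}| <o k"
      using small by (rule subset_small) blast
    show "\<forall>x\<in>{x\<in>BA_gen T lt Y. BT_le T lt x a}. \<exists>c\<in>{c\<in>BA_gen T lt S. BT_le T lt c a}. BT_le T lt x c"
      using BA_gen_interpolant(1)[OF Y b] unfolding a S_def by blast
  qed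
  show "ci_less k (BT_le T lt) {x\<in>BA_gen T lt Y. BT_le T lt a x}"
    unfolding ci_less_def
  proof (intro exI conjI)
    show "{c\<in>BA_gen T lt S. BT_le T lt a c} \<subseteq> {x\<in>BA_gen T lt Y. BT_le T lt a x}"
      using sub by blast
    show "|{c\<in>BA_gen T lt S. BT_le T lt a c}| <o k"
      using small by (rule subset_small) blast
    show "\<forall>x\<in>{x\<in>BA_gen T lt Y. BT_le T lt a x}. \<exists>c\<in>{c\<in>BA_gen T lt S. BT_le T lt a c}. BT_le T lt c x"
      using BA_gen_interpolant(2)[OF Y b] unfolding a S_def by blast
  qed
qed

lemma small_BA_gen_representatives:
  assumes "C \<subseteq> BA_gen T lt Y" and "|C| <o k"
  shows "\<exists>R. (\<forall>g\<in>R. bvars g \<subseteq> Y) \<and> |\<Union>g\<in>R. bvars g| <o k \<and> (\<forall>c\<in>C. \<exists>g\<in>R. c = bt_class T lt g)"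
proof -
  have "\<forall>c\<in>C. \<exists>g. bvars g \<subseteq> Y \<and> c = bt_class T lt g"
    using assms(1) unfolding subset_iff mem_BA_gen by blast
  then obtain rep where rep: "\<forall>c\<in>C. bvars (rep c) \<subseteq> Y \<and> c = bt_class T lt (rep c)"
    by (metis bchoice)
  have "|\<Union>g\<in>rep ` C. bvars g| <o k"
  proof (rule UN_small)
    show "|rep ` C| <o k"
      using assms(2) by (rule image_small)
    show "|bvars g| <o k" for g
      by (rule finite_small[OF finite_bvars])
  qed
  with rep show ?thesis
    by (intro exI[of _ "rep ` C"]) auto
qed

lemma BA_gen_kappa_sub_imp_closed:
  assumes Y: "subtree T lt Y" and ks: "kappa_sub k (BT_le T lt) (BA_gen T lt Y) (BA_gen T lt T)"
  shows "closed_in_tree k T lt Y"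
proof (rule ccontr)
  assume "\<not> closed_in_tree k T lt Y"
  then obtain t where lv: "on_level k T lt t" and t: "t \<in> T" "preds t \<subseteq> Y" "t \<notin> Y"
    by (rule not_closed_witness)
  let ?x = "\<lambda>s. bt_class T lt (BVar s)"
  obtain C where C: "C \<subseteq> {c\<in>BA_gen T lt Y. BT_le T lt c (?x t)}"
    and cofinal: "\<forall>c\<in>{c\<in>BA_gen T lt Y. BT_le T lt c (?x t)}. \<exists>c'\<in>C. BT_le T lt c c'"
    and "|C| <o k"
    using ks BVar_mem_BA_gen[OF t(1)] unfolding kappa_sub_def cf_less_def by blast
  have "C \<subseteq> BA_gen T lt Y"
    using C by auto
  from small_BA_gen_representatives[OF this \<open>|C| <o k\<close>]
  obtain R where R_Y: "\<forall>g\<in>R. bvars g \<subseteq> Y" and R_small: "|\<Union>g\<in>R. bvars g| <o k"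
    and R_C: "\<forall>c\<in>C. \<exists>g\<in>R. c = bt_class T lt g"
    by blast
  define L where "L = (\<Union>g\<in>R. bvars g) \<inter> preds t"
  have "|L| <o k"
    using R_small unfolding L_def by (rule subset_small) blast
  moreover have "L \<subseteq> preds t"
    unfolding L_def by blast
  ultimately obtain s where s: "s \<in> preds t" and above: "\<And>l. l \<in> L \<Longrightarrow> lt l s"
    using small_preds_bounded[OF lv] by blast
  then have sT: "s \<in> T" and "s \<in> Y" and "lt s t"
    using t unfolding preds_def by blast+
  then have "?x s \<in> BA_gen T lt Y" "BT_le T lt (?x s) (?x t)"
    using BVar_mem_BA_gen[of s Y] BT_le_BVar[OF _ t(1)] by blast+
  then obtain c where c: "c \<in> C" and "BT_le T lt (?x s) c"
    using cofinal by blast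
  then obtain g where g: "g \<in> R" "c = bt_class T lt g"
    using R_C by blast
  then have gT: "bvars g \<subseteq> T"
    using R_Y subtree_subset[OF Y] by blast
  have "entails (BVar s) g"
    using \<open>BT_le T lt (?x s) c\<close> BT_le_iff[OF _ gT] sT g(2) by simp
  moreover have "entails g (BVar t)"
    using C c BT_le_iff[OF gT] t(1) g(2) by auto
  ultimately obtain a where a: "a \<in> bvars g" "tree_le lt s a" "tree_le lt a t"
    using entails_BVar_between[OF sT t(1) gT] by blast
  then have "lt a s"
    using above g(1) R_Y t(3) gT unfolding L_def preds_def tree_le_def by blast
  then show False
    using a(2) sT gT a(1) lt_irrefl lt_asym unfolding tree_le_def by blast
qed

lemma BA_gen_kappa_sub_iff_closed:
  "subtree T lt Y \<Longrightarrow>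
    kappa_sub k (BT_le T lt) (BA_gen T lt Y) (BA_gen T lt T) \<longleftrightarrow> closed_in_tree k T lt Y"
  using BA_gen_kappa_sub_imp_closed closed_imp_BA_gen_kappa_sub by blast

section \<open>Transfer of strategies\<close>

definition BA_rep :: "'a bterm set \<Rightarrow> 'a bterm" where
  "BA_rep c = (SOME p. bvars p \<subseteq> T \<and> c = bt_class T lt p)"

lemma BA_rep_correct:
  assumes "c \<in> BA_gen T lt T"
  shows "bvars (BA_rep c) \<subseteq> T" and "c = bt_class T lt (BA_rep c)"
proof -
  have "\<exists>p. bvars p \<subseteq> T \<and> c = bt_class T lt p"
    using assms unfolding mem_BA_gen .
  then have "bvars (BA_rep c) \<subseteq> T \<and> c = bt_class T lt (BA_rep c)"
    unfolding BA_rep_def by (rule someI_ex)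
  then show "bvars (BA_rep c) \<subseteq> T" and "c = bt_class T lt (BA_rep c)"
    by blast+
qed

definition support :: "'a bterm set set \<Rightarrow> 'a set" where
  "support X = (\<Union>c\<in>X \<inter> BA_gen T lt T. bvars (BA_rep c))"

lemma support_subset: "support X \<subseteq> T"
  unfolding support_def using BA_rep_correct(1) by blast

lemma support_small:
  assumes "|X| <o k"
  shows "|support X| <o k"
  unfolding support_def
proof (rule UN_small)
  show "|X \<inter> BA_gen T lt T| <o k"
    using assms by (rule subset_small) blast
  show "|bvars (BA_rep c)| <o k" for c
    by (rule finite_small[OF finite_bvars])
qed

lemma subset_BA_gen_support:
  assumes "X \<subseteq> BA_gen T lt T" and "support X \<subseteq> Z"
  shows "X \<subseteq> BA_gen T lt Z"
proof
  fix c assume c: "c \<in> X"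
  then have "bvars (BA_rep c) \<subseteq> Z"
    using assms unfolding support_def by blast
  moreover have "c = bt_class T lt (BA_rep c)"
    using c assms(1) BA_rep_correct(2) by blast
  ultimately show "c \<in> BA_gen T lt Z"
    unfolding mem_BA_gen by blast
qed

text \<open>Adding to the move at stage \<open>\<alpha>\<close> its predecessors of rank \<open>< \<alpha>\<close> keeps the move of
  size \<open>< \<kappa>\<close> and makes the union of a play downward closed.\<close>

definition low_preds :: "'k \<Rightarrow> 'a set \<Rightarrow> 'a set" where
  "low_preds \<alpha> S = {s\<in>T. \<exists>t\<in>S \<inter> T. lt s t \<and> stage_less k (pred_rank t s) \<alpha>}"

lemma low_preds_subset: "low_preds \<alpha> S \<subseteq> T"
  unfolding low_preds_def by blast

lemma low_preds_mono:
  "stage_less k \<alpha> \<beta> \<Longrightarrow> S \<subseteq> S' \<Longrightarrow> low_preds \<alpha> S \<subseteq> low_preds \<beta> S'"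
  unfolding low_preds_def using stage_less_trans by blast

lemma low_preds_small:
  assumes \<alpha>: "\<alpha> \<in> Field k" and "|S| <o k"
  shows "|low_preds \<alpha> S| <o k"
proof -
  have "low_preds \<alpha> S \<subseteq> (\<Union>t\<in>S \<inter> T. {s\<in>preds t. stage_less k (pred_rank t s) \<alpha>})"
    unfolding low_preds_def preds_def by blast
  moreover have "|\<Union>t\<in>S \<inter> T. {s\<in>preds t. stage_less k (pred_rank t s) \<alpha>}| <o k"
  proof (rule UN_small)
    show "|S \<inter> T| <o k"
      using \<open>|S| <o k\<close> by (rule subset_small) blast
    show "|{s\<in>preds t. stage_less k (pred_rank t s) \<alpha>}| <o k" if "t \<in> S \<inter> T" for t
      using that \<alpha> preds_of_rank_below_small by blast
  qed
  ultimately show ?thesis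
    using subset_small by blast
qed

lemma BA_gen_UN_chain:
  assumes "relChain k Z"
  shows "(\<Union>\<alpha>\<in>Field k. BA_gen T lt (Z \<alpha>)) = BA_gen T lt (\<Union>\<alpha>\<in>Field k. Z \<alpha>)"
proof
  show "(\<Union>\<alpha>\<in>Field k. BA_gen T lt (Z \<alpha>)) \<subseteq> BA_gen T lt (\<Union>\<alpha>\<in>Field k. Z \<alpha>)"
    by (intro UN_least BA_gen_mono) auto
  show "BA_gen T lt (\<Union>\<alpha>\<in>Field k. Z \<alpha>) \<subseteq> (\<Union>\<alpha>\<in>Field k. BA_gen T lt (Z \<alpha>))"
  proof
    fix c assume "c \<in> BA_gen T lt (\<Union>\<alpha>\<in>Field k. Z \<alpha>)"
    then obtain p where p: "bvars p \<subseteq> (\<Union>\<alpha>\<in>Field k. Z \<alpha>)" "c = bt_class T lt p"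
      unfolding mem_BA_gen by blast
    have "|bvars p| <o k"
      by (rule finite_small[OF finite_bvars])
    then obtain \<alpha> where \<alpha>: "\<alpha> \<in> Field k" "bvars p \<subseteq> Z \<alpha>"
      using regularCard_UNION[OF Card_order regular assms p(1)] by blast
    then have "c \<in> BA_gen T lt (Z \<alpha>)"
      using p(2) unfolding mem_BA_gen by blast
    with \<alpha>(1) show "c \<in> (\<Union>\<alpha>\<in>Field k. BA_gen T lt (Z \<alpha>))"
      by blast
  qed
qed

lemma legal_play_Union_subtree:
  assumes legal: "legal_play k T xs ys"
    and low_preds_closed: "\<And>\<alpha>. \<alpha> \<in> Field k \<Longrightarrow> low_preds \<alpha> (xs \<alpha>) \<subseteq> (\<Union>\<beta>\<in>Field k. xs \<beta>)"
  shows "subtree T lt (\<Union>\<alpha>\<in>Field k. xs \<alpha>)"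
  unfolding subtree_def
proof (intro conjI ballI impI)
  show "(\<Union>\<alpha>\<in>Field k. xs \<alpha>) \<subseteq> T"
    using legal unfolding legal_play_def legal_I_def by blast
  fix y x assume y: "y \<in> (\<Union>\<alpha>\<in>Field k. xs \<alpha>)" and x: "x \<in> T" "lt x y"
  then obtain \<alpha> where \<alpha>: "\<alpha> \<in> Field k" "y \<in> xs \<alpha>"
    by blast
  have "y \<in> T"
    using \<alpha> legal unfolding legal_play_def legal_I_def by blast
  then have "pred_rank y x \<in> Field k"
    using x by (intro pred_rank_Field) (auto simp: preds_def)
  then obtain \<beta> where \<beta>: "\<beta> \<in> Field k" "stage_less k \<alpha> \<beta>" "stage_less k (pred_rank y x) \<beta>"
    using stage_less_succ2[OF \<alpha>(1)] by blast
  then have "y \<in> xs \<beta>"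
    using \<alpha>(2) legal_play_chains(1)[OF legal] unfolding relChain_def stage_less_def by blast
  then have "x \<in> low_preds \<beta> (xs \<beta>)"
    using x \<beta>(3) \<open>y \<in> T\<close> unfolding low_preds_def by blast
  then show "x \<in> (\<Union>\<alpha>\<in>Field k. xs \<alpha>)"
    using low_preds_closed[OF \<beta>(1)] by blast
qed

lemma legal_play_BA_gen_kappa_sub_iff:
  assumes "legal_play k T xs ys"
    and "\<And>\<alpha>. \<alpha> \<in> Field k \<Longrightarrow> low_preds \<alpha> (xs \<alpha>) \<subseteq> (\<Union>\<beta>\<in>Field k. xs \<beta>)"
  shows "kappa_sub k (BT_le T lt) (BA_gen T lt (\<Union>\<alpha>\<in>Field k. xs \<alpha>)) (BA_gen T lt T) \<longleftrightarrow>
    kappa_sub k (tree_le lt) (\<Union>\<alpha>\<in>Field k. xs \<alpha>) T"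
proof -
  have "subtree T lt (\<Union>\<alpha>\<in>Field k. xs \<alpha>)"
    using assms by (rule legal_play_Union_subtree)
  then show ?thesis
    by (simp add: BA_gen_kappa_sub_iff_closed tree_kappa_sub_iff_closed)
qed

lemma legal_I_BA_gen:
  assumes "legal_I k T xs ys \<alpha>"
    and "\<And>\<nu>. stage_less k \<nu> \<alpha> \<Longrightarrow> yB \<nu> \<subseteq> BA_gen T lt T \<and> support (yB \<nu>) \<subseteq> ys \<nu>"
  shows "legal_I k (BA_gen T lt T) (BA_gen T lt \<circ> xs) yB \<alpha>"
  unfolding legal_I_def comp_def
proof (intro conjI allI impI)
  have sub: "xs \<alpha> \<subseteq> T" and small: "|xs \<alpha>| <o k"
    using assms(1) unfolding legal_I_def by blast+
  show "BA_gen T lt (xs \<alpha>) \<subseteq> BA_gen T lt T"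
    using sub by (rule BA_gen_mono)
  show "|BA_gen T lt (xs \<alpha>)| <o k"
    using small by (rule BA_gen_small)
  fix \<nu> assume \<nu>: "stage_less k \<nu> \<alpha>"
  then have "yB \<nu> \<subseteq> BA_gen T lt T" "support (yB \<nu>) \<subseteq> ys \<nu>"
    using assms(2) by blast+
  moreover have "ys \<nu> \<subseteq> xs \<alpha>"
    using assms(1) \<nu> unfolding legal_I_def by blast
  ultimately show "yB \<nu> \<subseteq> BA_gen T lt (xs \<alpha>)"
    using subset_BA_gen_support[of "yB \<nu>" "xs \<alpha>"] by blast
qed

lemma legal_II_BA_gen:
  assumes "legal_II k T xs ys \<nu>" and "xB \<nu> \<subseteq> BA_gen T lt T" and "support (xB \<nu>) \<subseteq> xs \<nu>"
  shows "legal_II k (BA_gen T lt T) xB (BA_gen T lt \<circ> ys) \<nu>"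
  unfolding legal_II_def comp_def
proof (intro conjI)
  have "support (xB \<nu>) \<subseteq> ys \<nu>"
    using assms unfolding legal_II_def by blast
  with assms(2) show "xB \<nu> \<subseteq> BA_gen T lt (ys \<nu>)"
    by (rule subset_BA_gen_support)
  have sub: "ys \<nu> \<subseteq> T" and small: "|ys \<nu>| <o k"
    using assms(1) unfolding legal_II_def by blast+
  show "BA_gen T lt (ys \<nu>) \<subseteq> BA_gen T lt T"
    using sub by (rule BA_gen_mono)
  show "|BA_gen T lt (ys \<nu>)| <o k"
    using small by (rule BA_gen_small)
qed

text \<open>Player I answers in \<open>T\<close> with the support of \<open>\<sigma>\<close>'s answer to the lifted play, together
  with II's earlier moves (which legality demands), closed under \<open>low_preds\<close>.\<close>

definition tree_strategy_I_core ::
  "('k \<Rightarrow> ('k \<Rightarrow> 'a bterm set set) \<Rightarrow> 'a bterm set set) \<Rightarrow> 'k \<Rightarrow> ('k \<Rightarrow> 'a set) \<Rightarrow> 'a set" where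
  "tree_strategy_I_core \<sigma> \<alpha> ys =
     support (\<sigma> \<alpha> (BA_gen T lt \<circ> ys)) \<union> (\<Union>\<nu>\<in>{\<nu>. stage_less k \<nu> \<alpha>}. ys \<nu>)"

definition tree_strategy_I ::
  "('k \<Rightarrow> ('k \<Rightarrow> 'a bterm set set) \<Rightarrow> 'a bterm set set) \<Rightarrow> 'k \<Rightarrow> ('k \<Rightarrow> 'a set) \<Rightarrow> 'a set" where
  "tree_strategy_I \<sigma> \<alpha> ys =
     tree_strategy_I_core \<sigma> \<alpha> ys \<union> low_preds \<alpha> (tree_strategy_I_core \<sigma> \<alpha> ys)"

lemma strategy_I_tree_strategy_I:
  assumes "strategy_I k \<sigma>"
  shows "strategy_I k (tree_strategy_I \<sigma>)"
  unfolding strategy_I_def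
proof (intro ballI allI impI)
  fix \<alpha> and ys ys' :: "'k \<Rightarrow> 'a set"
  assume \<alpha>: "\<alpha> \<in> Field k" and eq: "\<forall>\<nu>. stage_less k \<nu> \<alpha> \<longrightarrow> ys \<nu> = ys' \<nu>"
  then have "\<forall>\<nu>. stage_less k \<nu> \<alpha> \<longrightarrow> (BA_gen T lt \<circ> ys) \<nu> = (BA_gen T lt \<circ> ys') \<nu>"
    by simp
  with \<alpha> have "\<sigma> \<alpha> (BA_gen T lt \<circ> ys) = \<sigma> \<alpha> (BA_gen T lt \<circ> ys')"
    using assms unfolding strategy_I_def by blast
  moreover have "(\<Union>\<nu>\<in>{\<nu>. stage_less k \<nu> \<alpha>}. ys \<nu>) = (\<Union>\<nu>\<in>{\<nu>. stage_less k \<nu> \<alpha>}. ys' \<nu>)"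
    using eq by simp
  ultimately show "tree_strategy_I \<sigma> \<alpha> ys = tree_strategy_I \<sigma> \<alpha> ys'"
    unfolding tree_strategy_I_def tree_strategy_I_core_def by simp
qed

context
  fixes \<sigma> and xs ys :: "'k \<Rightarrow> 'a set"
  assumes winning: "winning_I k (BT_le T lt) (BA_gen T lt T) \<sigma>"
    and follows: "\<And>\<alpha>. \<alpha> \<in> Field k \<Longrightarrow> xs \<alpha> = tree_strategy_I \<sigma> \<alpha> ys"
begin

lemma player_I_wins_BA_gen_play:
  "player_I_wins k (BT_le T lt) (BA_gen T lt T) (\<lambda>\<alpha>. \<sigma> \<alpha> (BA_gen T lt \<circ> ys)) (BA_gen T lt \<circ> ys)"
proof -
  have "\<forall>xs ys. (\<forall>\<alpha>\<in>Field k. xs \<alpha> = \<sigma> \<alpha> ys) \<longrightarrow> player_I_wins k (BT_le T lt) (BA_gen T lt T) xs ys"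
    using winning unfolding winning_I_def by blast
  from this[rule_format, of "\<lambda>\<alpha>. \<sigma> \<alpha> (BA_gen T lt \<circ> ys)" "BA_gen T lt \<circ> ys"] show ?thesis
    by simp
qed

lemma support_subset_tree_strategy_I:
  assumes "\<alpha> \<in> Field k"
  shows "support (\<sigma> \<alpha> (BA_gen T lt \<circ> ys)) \<subseteq> xs \<alpha>"
  unfolding follows[OF assms] tree_strategy_I_def tree_strategy_I_core_def by blast

lemma legal_I_tree_strategy_I:
  assumes \<alpha>: "\<alpha> \<in> Field k" and before: "\<And>\<nu>. stage_less k \<nu> \<alpha> \<Longrightarrow> legal_II k T xs ys \<nu>"
    and small: "|\<sigma> \<alpha> (BA_gen T lt \<circ> ys)| <o k"
  shows "legal_I k T xs ys \<alpha>"
proof -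
  define S where "S = tree_strategy_I_core \<sigma> \<alpha> ys"
  have ys_before: "ys \<nu> \<subseteq> T" "|ys \<nu>| <o k" if "stage_less k \<nu> \<alpha>" for \<nu>
    using before[OF that] unfolding legal_II_def by blast+
  have "S \<subseteq> T"
    unfolding S_def tree_strategy_I_core_def using support_subset ys_before(1) by blast
  moreover have "|S| <o k"
    unfolding S_def tree_strategy_I_core_def
  proof (rule Un_small)
    show "|support (\<sigma> \<alpha> (BA_gen T lt \<circ> ys))| <o k"
      using small by (rule support_small)
    show "|\<Union>\<nu>\<in>{\<nu>. stage_less k \<nu> \<alpha>}. ys \<nu>| <o k"
      using stage_small[OF \<alpha>] ys_before(2) by (rule UN_small) blast
  qed
  moreover have "xs \<alpha> = S \<union> low_preds \<alpha> S"
    unfolding S_def using follows[OF \<alpha>] by (simp add: tree_strategy_I_def)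
  moreover have "ys \<nu> \<subseteq> S" if "stage_less k \<nu> \<alpha>" for \<nu>
    unfolding S_def tree_strategy_I_core_def using that by blast
  ultimately show ?thesis
    unfolding legal_I_def using low_preds_subset Un_small[OF _ low_preds_small[OF \<alpha>]] by auto
qed

lemma tree_strategy_I_legal:
  assumes "\<alpha> \<in> Field k" and "\<And>\<nu>. stage_less k \<nu> \<alpha> \<Longrightarrow> legal_II k T xs ys \<nu>"
  shows "legal_I k T xs ys \<alpha> \<and>
    legal_I k (BA_gen T lt T) (\<lambda>\<alpha>. \<sigma> \<alpha> (BA_gen T lt \<circ> ys)) (BA_gen T lt \<circ> ys) \<alpha>"
  using assms
proof (induction rule: stage_induct)
  case (step \<alpha>)
  let ?xB = "\<lambda>\<alpha>. \<sigma> \<alpha> (BA_gen T lt \<circ> ys)" and ?yB = "BA_gen T lt \<circ> ys"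
  have "legal_I k (BA_gen T lt T) ?xB ?yB \<nu> \<and> legal_II k (BA_gen T lt T) ?xB ?yB \<nu>"
    if \<nu>: "stage_less k \<nu> \<alpha>" for \<nu>
  proof -
    have legal_I_B: "legal_I k (BA_gen T lt T) ?xB ?yB \<nu>"
      using step.IH[OF \<nu>] step.prems \<nu> stage_less_trans by blast
    have "legal_II k T xs ys \<nu>"
      using step.prems \<nu> by blast
    moreover have "?xB \<nu> \<subseteq> BA_gen T lt T"
      using legal_I_B unfolding legal_I_def by blast
    moreover have "support (?xB \<nu>) \<subseteq> xs \<nu>"
      using support_subset_tree_strategy_I stage_less_Field[OF \<nu>] by blast
    ultimately have "legal_II k (BA_gen T lt T) ?xB ?yB \<nu>"
      by (rule legal_II_BA_gen)
    with legal_I_B show ?thesis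
      by blast
  qed
  then have "legal_before k (BA_gen T lt T) ?xB ?yB \<alpha>"
    unfolding legal_before_def by blast
  then have legal_I_B: "legal_I k (BA_gen T lt T) ?xB ?yB \<alpha>"
    using legal_I_if_player_I_wins[OF player_I_wins_BA_gen_play step.hyps] by blast
  then have "|?xB \<alpha>| <o k"
    unfolding legal_I_def by blast
  with legal_I_B show ?case
    using legal_I_tree_strategy_I[OF step.hyps step.prems] by blast
qed

lemma legal_play_BA_gen_I:
  assumes legal: "legal_play k T xs ys"
  shows "legal_play k (BA_gen T lt T) (\<lambda>\<alpha>. \<sigma> \<alpha> (BA_gen T lt \<circ> ys)) (BA_gen T lt \<circ> ys)"
  unfolding legal_play_def
proof
  let ?xB = "\<lambda>\<alpha>. \<sigma> \<alpha> (BA_gen T lt \<circ> ys)" and ?yB = "BA_gen T lt \<circ> ys"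
  fix \<alpha> assume \<alpha>: "\<alpha> \<in> Field k"
  have legal_I_B: "legal_I k (BA_gen T lt T) ?xB ?yB \<alpha>"
    using tree_strategy_I_legal[OF \<alpha>] legal stage_less_Field unfolding legal_play_def by blast
  have "legal_II k T xs ys \<alpha>"
    using legal \<alpha> unfolding legal_play_def by blast
  moreover have "?xB \<alpha> \<subseteq> BA_gen T lt T"
    using legal_I_B unfolding legal_I_def by blast
  ultimately have "legal_II k (BA_gen T lt T) ?xB ?yB \<alpha>"
    using support_subset_tree_strategy_I[OF \<alpha>] by (rule legal_II_BA_gen)
  with legal_I_B show "legal_I k (BA_gen T lt T) ?xB ?yB \<alpha> \<and> legal_II k (BA_gen T lt T) ?xB ?yB \<alpha>"
    by blast
qed

lemma low_preds_subset_Union_I: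
  assumes legal: "legal_play k T xs ys" and \<alpha>: "\<alpha> \<in> Field k"
  shows "low_preds \<alpha> (xs \<alpha>) \<subseteq> (\<Union>\<beta>\<in>Field k. xs \<beta>)"
proof -
  obtain \<beta> where \<beta>: "\<beta> \<in> Field k" "stage_less k \<alpha> \<beta>"
    using stage_less_succ[OF \<alpha>] by blast
  have "xs \<alpha> \<subseteq> ys \<alpha>"
    using legal \<alpha> unfolding legal_play_def legal_II_def by blast
  also have "\<dots> \<subseteq> tree_strategy_I_core \<sigma> \<beta> ys"
    using \<beta>(2) unfolding tree_strategy_I_core_def by blast
  finally have "low_preds \<alpha> (xs \<alpha>) \<subseteq> xs \<beta>"
    using low_preds_mono[OF \<beta>(2)] follows[OF \<beta>(1)] unfolding tree_strategy_I_def by blast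
  with \<beta>(1) show ?thesis
    by blast
qed

lemma player_I_wins_tree_play: "player_I_wins k (tree_le lt) T xs ys"
proof -
  let ?xB = "\<lambda>\<alpha>. \<sigma> \<alpha> (BA_gen T lt \<circ> ys)"
  have "legal_I k T xs ys \<alpha>" if "\<alpha> \<in> Field k" "legal_before k T xs ys \<alpha>" for \<alpha>
    using tree_strategy_I_legal that unfolding legal_before_def by blast
  then have wins_iff: "player_I_wins k (tree_le lt) T xs ys \<longleftrightarrow>
      \<not> (legal_play k T xs ys \<and> kappa_sub k (tree_le lt) (\<Union>\<alpha>\<in>Field k. xs \<alpha>) T)"
    by (rule player_I_wins_iff_if_I_legal)
  show ?thesis
    unfolding wins_iff
  proof
    assume "legal_play k T xs ys \<and> kappa_sub k (tree_le lt) (\<Union>\<alpha>\<in>Field k. xs \<alpha>) T"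
    then have legal: "legal_play k T xs ys" and ks: "kappa_sub k (tree_le lt) (\<Union>\<alpha>\<in>Field k. xs \<alpha>) T"
      by blast+
    note legal_B = legal_play_BA_gen_I[OF legal]
    have "(\<Union>\<alpha>\<in>Field k. ?xB \<alpha>) = (\<Union>\<alpha>\<in>Field k. BA_gen T lt (ys \<alpha>))"
      using legal_play_Union_eq[OF legal_B] by simp
    also have "\<dots> = BA_gen T lt (\<Union>\<alpha>\<in>Field k. ys \<alpha>)"
      using legal_play_chains(2)[OF legal] by (rule BA_gen_UN_chain)
    also have "\<dots> = BA_gen T lt (\<Union>\<alpha>\<in>Field k. xs \<alpha>)"
      using legal_play_Union_eq[OF legal] by simp
    finally have "\<not> kappa_sub k (BT_le T lt) (BA_gen T lt (\<Union>\<alpha>\<in>Field k. xs \<alpha>)) (BA_gen T lt T)"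
      using player_I_wins_BA_gen_play player_I_wins_legal_play_iff[OF legal_B] by simp
    then show False
      using legal_play_BA_gen_kappa_sub_iff[OF legal low_preds_subset_Union_I[OF legal]] ks by simp
  qed
qed

end

lemma winning_I_tree_strategy_I:
  assumes "winning_I k (BT_le T lt) (BA_gen T lt T) \<sigma>"
  shows "winning_I k (tree_le lt) T (tree_strategy_I \<sigma>)"
  unfolding winning_I_def
proof (intro conjI allI impI)
  show "strategy_I k (tree_strategy_I \<sigma>)"
    using assms strategy_I_tree_strategy_I unfolding winning_I_def by blast
  fix xs ys assume "\<forall>\<alpha>\<in>Field k. xs \<alpha> = tree_strategy_I \<sigma> \<alpha> ys"
  then show "player_I_wins k (tree_le lt) T xs ys"
    using player_I_wins_tree_play[OF assms] by blast
qed

definition tree_strategy_II ::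
  "('k \<Rightarrow> ('k \<Rightarrow> 'a bterm set set) \<Rightarrow> 'a bterm set set) \<Rightarrow> 'k \<Rightarrow> ('k \<Rightarrow> 'a set) \<Rightarrow> 'a set" where
  "tree_strategy_II \<tau> \<alpha> xs = xs \<alpha> \<union> support (\<tau> \<alpha> (BA_gen T lt \<circ> xs)) \<union> low_preds \<alpha> (xs \<alpha>)"

lemma strategy_II_tree_strategy_II:
  assumes "strategy_II k \<tau>"
  shows "strategy_II k (tree_strategy_II \<tau>)"
  unfolding strategy_II_def
proof (intro ballI allI impI)
  fix \<alpha> and xs xs' :: "'k \<Rightarrow> 'a set"
  assume \<alpha>: "\<alpha> \<in> Field k" and eq: "\<forall>\<nu>. (\<nu>, \<alpha>) \<in> k \<longrightarrow> xs \<nu> = xs' \<nu>"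
  then have "\<forall>\<nu>. (\<nu>, \<alpha>) \<in> k \<longrightarrow> (BA_gen T lt \<circ> xs) \<nu> = (BA_gen T lt \<circ> xs') \<nu>"
    by simp
  with \<alpha> have "\<tau> \<alpha> (BA_gen T lt \<circ> xs) = \<tau> \<alpha> (BA_gen T lt \<circ> xs')"
    using assms unfolding strategy_II_def by blast
  moreover have "xs \<alpha> = xs' \<alpha>"
    using eq stage_refl[OF \<alpha>] by blast
  ultimately show "tree_strategy_II \<tau> \<alpha> xs = tree_strategy_II \<tau> \<alpha> xs'"
    unfolding tree_strategy_II_def by simp
qed

context
  fixes \<tau> and xs ys :: "'k \<Rightarrow> 'a set"
  assumes winning: "winning_II k (BT_le T lt) (BA_gen T lt T) \<tau>"
    and follows: "\<And>\<alpha>. \<alpha> \<in> Field k \<Longrightarrow> ys \<alpha> = tree_strategy_II \<tau> \<alpha> xs"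
begin

lemma not_player_I_wins_BA_gen_play:
  "\<not> player_I_wins k (BT_le T lt) (BA_gen T lt T) (BA_gen T lt \<circ> xs) (\<lambda>\<alpha>. \<tau> \<alpha> (BA_gen T lt \<circ> xs))"
proof -
  have "\<forall>xs ys. (\<forall>\<alpha>\<in>Field k. ys \<alpha> = \<tau> \<alpha> xs) \<longrightarrow> \<not> player_I_wins k (BT_le T lt) (BA_gen T lt T) xs ys"
    using winning unfolding winning_II_def by blast
  from this[rule_format, of "\<lambda>\<alpha>. \<tau> \<alpha> (BA_gen T lt \<circ> xs)" "BA_gen T lt \<circ> xs"] show ?thesis
    by simp
qed

lemma support_subset_tree_strategy_II:
  assumes "\<alpha> \<in> Field k"
  shows "support (\<tau> \<alpha> (BA_gen T lt \<circ> xs)) \<subseteq> ys \<alpha>"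
  unfolding follows[OF assms] tree_strategy_II_def by blast

lemma legal_II_tree_strategy_II:
  assumes \<alpha>: "\<alpha> \<in> Field k" and "legal_I k T xs ys \<alpha>"
    and small: "|\<tau> \<alpha> (BA_gen T lt \<circ> xs)| <o k"
  shows "legal_II k T xs ys \<alpha>"
proof -
  have xs_\<alpha>: "xs \<alpha> \<subseteq> T" "|xs \<alpha>| <o k"
    using \<open>legal_I k T xs ys \<alpha>\<close> unfolding legal_I_def by blast+
  have "|ys \<alpha>| <o k"
    unfolding follows[OF \<alpha>] tree_strategy_II_def
    using Un_small xs_\<alpha>(2) support_small[OF small] low_preds_small[OF \<alpha> xs_\<alpha>(2)] by auto
  moreover have "xs \<alpha> \<subseteq> ys \<alpha>" "ys \<alpha> \<subseteq> T"
    unfolding follows[OF \<alpha>] tree_strategy_II_def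
    using xs_\<alpha>(1) support_subset low_preds_subset by blast+
  ultimately show ?thesis
    unfolding legal_II_def by blast
qed

lemma tree_strategy_II_legal:
  assumes "\<alpha> \<in> Field k" and "\<And>\<nu>. (\<nu>, \<alpha>) \<in> k \<Longrightarrow> legal_I k T xs ys \<nu>"
  shows "legal_I k (BA_gen T lt T) (BA_gen T lt \<circ> xs) (\<lambda>\<alpha>. \<tau> \<alpha> (BA_gen T lt \<circ> xs)) \<alpha>
    \<and> legal_II k (BA_gen T lt T) (BA_gen T lt \<circ> xs) (\<lambda>\<alpha>. \<tau> \<alpha> (BA_gen T lt \<circ> xs)) \<alpha>
    \<and> legal_II k T xs ys \<alpha>"
  using assms
proof (induction rule: stage_induct)
  case (step \<alpha>)
  let ?xB = "BA_gen T lt \<circ> xs" and ?yB = "\<lambda>\<alpha>. \<tau> \<alpha> (BA_gen T lt \<circ> xs)"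
  have before: "legal_I k (BA_gen T lt T) ?xB ?yB \<nu> \<and> legal_II k (BA_gen T lt T) ?xB ?yB \<nu>
      \<and> legal_II k T xs ys \<nu>" if \<nu>: "stage_less k \<nu> \<alpha>" for \<nu>
  proof (rule step.IH[OF \<nu>])
    fix \<mu> assume "(\<mu>, \<nu>) \<in> k"
    with \<nu> have "(\<mu>, \<alpha>) \<in> k"
      using wo_rel.TRANS[OF wo_rel] unfolding stage_less_def trans_def by blast
    then show "legal_I k T xs ys \<mu>"
      by (rule step.prems)
  qed
  have legal_I_T: "legal_I k T xs ys \<alpha>"
    using step.prems stage_refl[OF step.hyps] by blast
  have "?yB \<nu> \<subseteq> BA_gen T lt T \<and> support (?yB \<nu>) \<subseteq> ys \<nu>" if \<nu>: "stage_less k \<nu> \<alpha>" for \<nu>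
    using before[OF \<nu>] support_subset_tree_strategy_II[OF stage_less_Field[OF \<nu>]]
    unfolding legal_II_def by blast
  with legal_I_T have legal_I_B: "legal_I k (BA_gen T lt T) ?xB ?yB \<alpha>"
    by (rule legal_I_BA_gen)
  have "legal_before k (BA_gen T lt T) ?xB ?yB \<alpha>"
    using before unfolding legal_before_def by blast
  then have legal_II_B: "legal_II k (BA_gen T lt T) ?xB ?yB \<alpha>"
    using legal_II_if_not_player_I_wins[OF not_player_I_wins_BA_gen_play step.hyps] legal_I_B by blast
  then have "|?yB \<alpha>| <o k"
    unfolding legal_II_def by blast
  with legal_I_B legal_II_B show ?case
    using legal_II_tree_strategy_II[OF step.hyps legal_I_T] by blast
qed

lemma legal_play_BA_gen_II:
  assumes legal: "legal_play k T xs ys"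
  shows "legal_play k (BA_gen T lt T) (BA_gen T lt \<circ> xs) (\<lambda>\<alpha>. \<tau> \<alpha> (BA_gen T lt \<circ> xs))"
  unfolding legal_play_def
proof
  fix \<alpha> assume \<alpha>: "\<alpha> \<in> Field k"
  have "legal_I k T xs ys \<nu>" if "(\<nu>, \<alpha>) \<in> k" for \<nu>
    using legal FieldI1[OF that] unfolding legal_play_def by blast
  then show "legal_I k (BA_gen T lt T) (BA_gen T lt \<circ> xs) (\<lambda>\<alpha>. \<tau> \<alpha> (BA_gen T lt \<circ> xs)) \<alpha>
      \<and> legal_II k (BA_gen T lt T) (BA_gen T lt \<circ> xs) (\<lambda>\<alpha>. \<tau> \<alpha> (BA_gen T lt \<circ> xs)) \<alpha>"
    using tree_strategy_II_legal[OF \<alpha>] by blast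
qed

lemma low_preds_subset_Union_II:
  assumes legal: "legal_play k T xs ys" and \<alpha>: "\<alpha> \<in> Field k"
  shows "low_preds \<alpha> (xs \<alpha>) \<subseteq> (\<Union>\<beta>\<in>Field k. xs \<beta>)"
proof -
  have "low_preds \<alpha> (xs \<alpha>) \<subseteq> ys \<alpha>"
    unfolding follows[OF \<alpha>] tree_strategy_II_def by blast
  then show ?thesis
    using legal_play_Union_eq[OF legal] \<alpha> by blast
qed

lemma not_player_I_wins_tree_play: "\<not> player_I_wins k (tree_le lt) T xs ys"
proof -
  have "legal_II k T xs ys \<alpha>"
    if "\<alpha> \<in> Field k" "legal_before k T xs ys \<alpha>" "legal_I k T xs ys \<alpha>" for \<alpha>
  proof -
    have "legal_I k T xs ys \<nu>" if "(\<nu>, \<alpha>) \<in> k" for \<nu>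
      using that \<open>legal_before k T xs ys \<alpha>\<close> \<open>legal_I k T xs ys \<alpha>\<close>
      unfolding legal_before_def stage_less_def by blast
    then show ?thesis
      using tree_strategy_II_legal[OF \<open>\<alpha> \<in> Field k\<close>] by blast
  qed
  then have wins_iff: "player_I_wins k (tree_le lt) T xs ys \<longleftrightarrow>
      legal_play k T xs ys \<and> \<not> kappa_sub k (tree_le lt) (\<Union>\<alpha>\<in>Field k. xs \<alpha>) T"
    by (rule player_I_wins_iff_if_II_legal)
  show ?thesis
    unfolding wins_iff
  proof
    assume "legal_play k T xs ys \<and> \<not> kappa_sub k (tree_le lt) (\<Union>\<alpha>\<in>Field k. xs \<alpha>) T"
    then have legal: "legal_play k T xs ys"
      and not_ks: "\<not> kappa_sub k (tree_le lt) (\<Union>\<alpha>\<in>Field k. xs \<alpha>) T"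
      by blast+
    note legal_B = legal_play_BA_gen_II[OF legal]
    have "(\<Union>\<alpha>\<in>Field k. (BA_gen T lt \<circ> xs) \<alpha>) = BA_gen T lt (\<Union>\<alpha>\<in>Field k. xs \<alpha>)"
      using BA_gen_UN_chain[OF legal_play_chains(1)[OF legal]] by simp
    then have "kappa_sub k (BT_le T lt) (BA_gen T lt (\<Union>\<alpha>\<in>Field k. xs \<alpha>)) (BA_gen T lt T)"
      using not_player_I_wins_BA_gen_play player_I_wins_legal_play_iff[OF legal_B] by simp
    then show False
      using legal_play_BA_gen_kappa_sub_iff[OF legal low_preds_subset_Union_II[OF legal]] not_ks by simp
  qed
qed

end

lemma winning_II_tree_strategy_II:
  assumes "winning_II k (BT_le T lt) (BA_gen T lt T) \<tau>"
  shows "winning_II k (tree_le lt) T (tree_strategy_II \<tau>)"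
  unfolding winning_II_def
proof (intro conjI allI impI)
  show "strategy_II k (tree_strategy_II \<tau>)"
    using assms strategy_II_tree_strategy_II unfolding winning_II_def by blast
  fix xs ys assume "\<forall>\<alpha>\<in>Field k. ys \<alpha> = tree_strategy_II \<tau> \<alpha> xs"
  then show "\<not> player_I_wins k (tree_le lt) T xs ys"
    using not_player_I_wins_tree_play[OF assms] by blast
qed

lemma game_undetermined_BA_gen:
  assumes "game_undetermined k (tree_le lt) T"
  shows "game_undetermined k (BT_le T lt) (BA_gen T lt T)"
  using assms winning_I_tree_strategy_I winning_II_tree_strategy_II
  unfolding game_undetermined_def by blast

end

theorem proposition11:
  fixes k :: "'k rel" and T :: "'a set" and lt :: "'a \<Rightarrow> 'a \<Rightarrow> bool"
  assumes kappa_card: "Card_order k"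
    and kappa_regular: "regularCard k"
    and kappa_uncountable: "(natLeq, k) \<in> ordLess"
    and tree: "is_tree T lt"
    and height: "height_succ k T lt"
    and size: "(card_of T, cardSuc k) \<in> ordIso"
  shows "(\<forall>Y. subtree T lt Y \<longrightarrow>
            (kappa_sub k (BT_le T lt) (BA_gen T lt Y) (BA_gen T lt T)
             \<longleftrightarrow> closed_in_tree k T lt Y))
       \<and> (game_undetermined k (tree_le lt) T
            \<longrightarrow> game_undetermined k (BT_le T lt) (BA_gen T lt T))"
proof -
  interpret kappa_tree k T lt
    by unfold_locales (fact kappa_card kappa_regular kappa_uncountable tree height)+
  show ?thesis
    using BA_gen_kappa_sub_iff_closed game_undetermined_BA_gen by blast
qed

end
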